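(* Let $T$ be a linear operator in $H$ with $\overline{\operatorname{dom}(T)}=H$, and let $V_n\subset\operatorname{dom}(T)$, $n\in\mathbb N$, be finite-dimensional subspaces with $P_{V_n}\stackrel{s}{\to}I$. Then for any compact $\Omega\subset W_{e1}(T)$ there exist finite-dimensional subspaces $H_n\subset\operatorname{dom}(T)$ with $V_n\subset H_n$, $n\in\mathbb N$, such that \[ P_{H_n}\stackrel{s}{\to}I,\qquad \sup_{\lambda\in\Omega}\operatorname{dist}(\lambda,\sigma(T_{H_n}))\to0\quad(n\to\infty), \] and if $\Omega\subset\operatorname{int}W_{e1}(T)$ is a finite set, then $\sigma(T_{H_n})=\sigma(T_{V_n})\cup\Omega$. If, in addition, (a) $W(T)\neq\mathbb C$ or $\operatorname{dom}(T)\subset\operatorname{dom}(T^* )$, and (b) $T_{V_n}\stackrel{gsr}{\to}T$ with a corresponding point $\lambda_0$ (as in the definition of generalized strong resolvent convergence) satisfying $\lambda_0\notin\overline{W(T)}$ if $W(T)\neq\mathbb C$, and $\lambda_0\notin\Omega$ otherwise, then the subspaces $H_n$ can be constructed so that moreover $T_{H_n}\stackrel{gsr}{\to}T$.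
   Context: $H$ is a separable infinite-dimensional complex Hilbert space. $W(T)=\{\langle Tx,x\rangle:x\in\operatorname{dom}(T),\|x\|=1\}$. $W_{e1}(T):=\bigcap_{V}\overline{W(T|_{V^\perp\cap\operatorname{dom}(T)})}$, the intersection over all finite-dimensional subspaces $V\subset H$. For closed $V\subset\operatorname{dom}(T)$, $P_V$ is the orthogonal projection onto $V$ and $T_V:=P_VT|_V$ the compression. For operators $T_n$ in closed subspaces $H_n$ with orthogonal projections $P_n$, $T_n\stackrel{gsr}{\to}T$ means: there exist $n_0$ and $\lambda_0\in\bigcap_{n\ge n_0}\rho(T_n)\cap\rho(T)$ with $(T_n-\lambda_0)^{-1}P_n\to(T-\lambda_0)^{-1}$ strongly. *)

theory Defs
  imports "HOL-Analysis.Analysis"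
begin

class complex_vector = ab_group_add +
  fixes scaleC :: "complex \<Rightarrow> 'a \<Rightarrow> 'a"  (infixr \<open>*\<^sub>C\<close> 75)
  assumes scaleC_add_right: "a *\<^sub>C (x + y) = a *\<^sub>C x + a *\<^sub>C y"
    and scaleC_add_left: "(a + b) *\<^sub>C x = a *\<^sub>C x + b *\<^sub>C x"
    and scaleC_scaleC: "a *\<^sub>C (b *\<^sub>C x) = (a * b) *\<^sub>C x"
    and scaleC_one: "1 *\<^sub>C x = x"

class complex_inner = complex_vector +
  fixes cinner :: "'a \<Rightarrow> 'a \<Rightarrow> complex"
  assumes cinner_commute: "cinner x y = cnj (cinner y x)"
    and cinner_add_left: "cinner (x + y) z = cinner x z + cinner y z"
    and cinner_scaleC_left: "cinner (r *\<^sub>C x) y = r * cinner x y"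
    and cinner_ge_zero: "0 \<le> Re (cinner x x)"
    and cinner_eq_zero_iff: "cinner x x = 0 \<longleftrightarrow> x = 0"

definition (in complex_inner) cnorm :: "'a \<Rightarrow> real" where
  "cnorm x = sqrt (Re (cinner x x))"

class chilbert = complex_inner +
  assumes complete:
    "(\<forall>e>0. \<exists>N. \<forall>m\<ge>N. \<forall>n\<ge>N. cnorm (X m - X n) < e) \<Longrightarrow>
     \<exists>L. (\<lambda>n. cnorm (X n - L)) \<longlonglongrightarrow> 0"

definition cspan :: "'a::complex_vector set \<Rightarrow> 'a set" where
  "cspan S = {sum (\<lambda>x. c x *\<^sub>C x) F | F c. finite F \<and> F \<subseteq> S}"

definition csubspace :: "'a::complex_vector set \<Rightarrow> bool" where
  "csubspace V \<longleftrightarrow> 0 \<in> V \<and> (\<forall>x\<in>V. \<forall>y\<in>V. x + y \<in> V) \<and> (\<forall>c. \<forall>x\<in>V. c *\<^sub>C x \<in> V)"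

definition fin_dim_subspace :: "'a::complex_vector set \<Rightarrow> bool" where
  "fin_dim_subspace V \<longleftrightarrow> csubspace V \<and> (\<exists>B. finite B \<and> B \<subseteq> V \<and> V = cspan B)"

definition clinear_on :: "'a::complex_vector set \<Rightarrow> ('a \<Rightarrow> 'a) \<Rightarrow> bool" where
  "clinear_on D T \<longleftrightarrow> csubspace D \<and>
     (\<forall>x\<in>D. \<forall>y\<in>D. T (x + y) = T x + T y) \<and> (\<forall>c. \<forall>x\<in>D. T (c *\<^sub>C x) = c *\<^sub>C T x)"

definition separable_hilbert :: "'a::chilbert itself \<Rightarrow> bool" where
  "separable_hilbert _ \<longleftrightarrow>
     (\<exists>S::'a set. countable S \<and> (\<forall>x. \<forall>e>0. \<exists>s\<in>S. cnorm (x - s) < e))"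

definition infinite_dim :: "'a::chilbert itself \<Rightarrow> bool" where
  "infinite_dim _ \<longleftrightarrow> (\<forall>B::'a set. finite B \<longrightarrow> cspan B \<noteq> UNIV)"

definition dense_set :: "'a::chilbert set \<Rightarrow> bool" where
  "dense_set D \<longleftrightarrow> (\<forall>x. \<forall>e>0. \<exists>y\<in>D. cnorm (x - y) < e)"

definition orth :: "'a::complex_inner set \<Rightarrow> 'a set" where
  "orth V = {x. \<forall>v\<in>V. cinner x v = 0}"

definition proj :: "'a::complex_inner set \<Rightarrow> 'a \<Rightarrow> 'a" where
  "proj V x = (THE y. y \<in> V \<and> (\<forall>v\<in>V. cinner (x - y) v = 0))"

text \<open>Compression T_V = P_V T restricted to V (as a map on V).\<close>
definition compr :: "'a::complex_inner set \<Rightarrow> ('a \<Rightarrow> 'a) \<Rightarrow> 'a \<Rightarrow> 'a" where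
  "compr V T = (\<lambda>x. proj V (T x))"

definition numrange :: "'a::complex_inner set \<Rightarrow> ('a \<Rightarrow> 'a) \<Rightarrow> complex set" where
  "numrange D T = {cinner (T x) x | x. x \<in> D \<and> cnorm x = 1}"

definition W_e1 :: "'a::complex_inner set \<Rightarrow> ('a \<Rightarrow> 'a) \<Rightarrow> complex set" where
  "W_e1 D T = \<Inter> {closure (numrange (orth V \<inter> D) T) | V. fin_dim_subspace V}"

definition adj_dom :: "'a::complex_inner set \<Rightarrow> ('a \<Rightarrow> 'a) \<Rightarrow> 'a set" where
  "adj_dom D T = {y. \<exists>z. \<forall>x\<in>D. cinner (T x) y = cinner x z}"

definition resolvent :: "'a::complex_inner set \<Rightarrow> ('a \<Rightarrow> 'a) \<Rightarrow> complex \<Rightarrow> 'a \<Rightarrow> 'a" where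
  "resolvent D A l = inv_into D (\<lambda>x. A x - l *\<^sub>C x)"

definition resolvent_set :: "'a::complex_inner set \<Rightarrow> 'a set \<Rightarrow> ('a \<Rightarrow> 'a) \<Rightarrow> complex set" where
  "resolvent_set K D A = {l. bij_betw (\<lambda>x. A x - l *\<^sub>C x) D K \<and>
      (\<exists>C. \<forall>y\<in>K. cnorm (resolvent D A l y) \<le> C * cnorm y)}"

definition op_spectrum :: "'a::complex_inner set \<Rightarrow> 'a set \<Rightarrow> ('a \<Rightarrow> 'a) \<Rightarrow> complex set" where
  "op_spectrum K D A = UNIV - resolvent_set K D A"

definition compr_spectrum :: "'a::complex_inner set \<Rightarrow> ('a \<Rightarrow> 'a) \<Rightarrow> complex set" where
  "compr_spectrum V T = op_spectrum V V (compr V T)"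

definition proj_strong_to_id :: "(nat \<Rightarrow> 'a::complex_inner set) \<Rightarrow> bool" where
  "proj_strong_to_id V \<longleftrightarrow> (\<forall>x. (\<lambda>n. cnorm (proj (V n) x - x)) \<longlonglongrightarrow> 0)"

definition gsr_with ::
  "(nat \<Rightarrow> 'a::complex_inner set) \<Rightarrow> (nat \<Rightarrow> 'a set) \<Rightarrow> (nat \<Rightarrow> 'a \<Rightarrow> 'a) \<Rightarrow>
   'a set \<Rightarrow> ('a \<Rightarrow> 'a) \<Rightarrow> nat \<Rightarrow> complex \<Rightarrow> bool" where
  "gsr_with Hs Ds Ts D T n0 l0 \<longleftrightarrow>
     (\<forall>n\<ge>n0. l0 \<in> resolvent_set (Hs n) (Ds n) (Ts n)) \<and> l0 \<in> resolvent_set UNIV D T \<and>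
     (\<forall>x. (\<lambda>n. cnorm (resolvent (Ds n) (Ts n) l0 (proj (Hs n) x) - resolvent D T l0 x))
            \<longlonglongrightarrow> 0)"

definition compr_gsr_with ::
  "(nat \<Rightarrow> 'a::complex_inner set) \<Rightarrow> 'a set \<Rightarrow> ('a \<Rightarrow> 'a) \<Rightarrow> nat \<Rightarrow> complex \<Rightarrow> bool" where
  "compr_gsr_with Hs D T n0 l0 = gsr_with Hs Hs (\<lambda>n. compr (Hs n) T) D T n0 l0"

definition compr_gsr :: "(nat \<Rightarrow> 'a::complex_inner set) \<Rightarrow> 'a set \<Rightarrow> ('a \<Rightarrow> 'a) \<Rightarrow> bool" where
  "compr_gsr Hs D T \<longleftrightarrow> (\<exists>n0 l0. compr_gsr_with Hs D T n0 l0)"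

end

theory Submission
  imports Defs
begin

text \<open>Each \<open>H\<^sub>n\<close> arises from \<open>V\<^sub>n\<close> by adjoining unit vectors \<open>x \<in> dom T\<close> one at a time, each
  orthogonal to the current space \<open>K\<close> and to \<open>T K\<close> (and to \<open>T\<^sup>* K\<close> when \<open>dom T \<subseteq> dom T\<^sup>*\<close>).
  The compression to \<open>span (K \<union> {x})\<close> is then block triangular, so its spectrum is
  \<open>\<sigma>(T\<^sub>K) \<union> {\<langle>T x, x\<rangle>}\<close>. Such \<open>x\<close> exist with \<open>\<langle>T x, x\<rangle>\<close> as close as we like to any point of \<open>W\<^sub>e\<^sub>1(T)\<close>, and
  equal to it at interior points, because the numerical range on the complement of a
  finite-dimensional space is convex (Toeplitz--Hausdorff); taking the new Ritz values on a
  \<open>1/n\<close>-net of \<open>\<Omega>\<close> gives the spectral approximation, and \<open>V\<^sub>n \<subseteq> H\<^sub>n\<close> gives \<open>P\<^sub>H\<^sub>n \<rightarrow> I\<close>.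

  For the resolvents, \<open>T\<^sub>H\<^sub>n - \<lambda>\<^sub>0\<close> is bounded below, uniformly in \<open>n\<close>, on the vectors it maps into
  \<open>V\<^sub>n\<^sup>\<perp>\<close>: by the distance from \<open>\<lambda>\<^sub>0\<close> to \<open>W(T)\<close>, or, for the block-diagonal construction, by the
  distance from \<open>\<lambda>\<^sub>0\<close> to Ritz values chosen near \<open>\<Omega>\<close>. This yields
  \<open>\<parallel>(T\<^sub>H\<^sub>n - \<lambda>\<^sub>0)\<^sup>-\<^sup>1 P\<^sub>H\<^sub>n x - (T\<^sub>V\<^sub>n - \<lambda>\<^sub>0)\<^sup>-\<^sup>1 P\<^sub>V\<^sub>n x\<parallel> \<le> C \<parallel>x - P\<^sub>V\<^sub>n x\<parallel>\<close>.\<close>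

interpretation cvs: vector_space "scaleC :: complex \<Rightarrow> 'a::complex_vector \<Rightarrow> 'a"
  by unfold_locales (auto simp: scaleC_add_right scaleC_add_left scaleC_scaleC scaleC_one)

lemma cspan_eq: "cspan S = cvs.span S"
  unfolding cspan_def cvs.span_explicit by auto

lemma csubspace_eq: "csubspace S = cvs.subspace S"
  unfolding csubspace_def cvs.subspace_def by auto

lemma scaleC_zero_left [simp]: "0 *\<^sub>C x = 0"
  by (rule cvs.scale_zero_left)

lemma scaleC_zero_right [simp]: "a *\<^sub>C 0 = 0"
  by (rule cvs.scale_zero_right)

lemma cinner_zero_left [simp]: "cinner 0 y = 0"
  using cinner_add_left[of 0 0 y] by simp

lemma cinner_add_right: "cinner x (y + z) = cinner x y + cinner x z"
  by (metis cinner_add_left cinner_commute complex_cnj_add)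

lemma cinner_zero_right [simp]: "cinner x 0 = 0"
  using cinner_add_right[of x 0 0] by simp

lemma cinner_scaleC_right: "cinner x (r *\<^sub>C y) = cnj r * cinner x y"
  by (metis cinner_commute cinner_scaleC_left complex_cnj_mult)

lemma cinner_minus_left: "cinner (- x) y = - cinner x y"
  using cinner_add_left[of x "-x" y] by (simp add: eq_neg_iff_add_eq_0 add.commute)

lemma cinner_minus_right: "cinner x (- y) = - cinner x y"
  using cinner_add_right[of x y "-y"] by (simp add: eq_neg_iff_add_eq_0 add.commute)

lemma cinner_diff_left: "cinner (x - y) z = cinner x z - cinner y z"
  by (simp only: diff_conv_add_uminus cinner_add_left cinner_minus_left)

lemma cinner_diff_right: "cinner x (y - z) = cinner x y - cinner x z"
  by (simp only: diff_conv_add_uminus cinner_add_right cinner_minus_right)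

lemmas cinner_simps = cinner_add_left cinner_add_right cinner_diff_left cinner_diff_right
  cinner_scaleC_left cinner_scaleC_right

lemma cinner_eq_zero_sym: "cinner x y = 0 \<Longrightarrow> cinner y x = 0"
  by (metis cinner_commute complex_cnj_zero)

lemma cinner_self_real: "cinner x x = complex_of_real (Re (cinner x x))"
  by (metis cinner_commute complex_cnj_cancel_iff complex_is_Real_iff of_real_Re Reals_cnj_iff)

lemma cnorm_nonneg: "0 \<le> cnorm x"
  unfolding cnorm_def using cinner_ge_zero by simp

lemma cnorm_sq: "(cnorm x)^2 = Re (cinner x x)"
  unfolding cnorm_def using cinner_ge_zero by simp

lemma cnorm_sq_complex: "complex_of_real ((cnorm x)^2) = cinner x x"
  using cnorm_sq cinner_self_real by metis

lemma cnorm_zero [simp]: "cnorm 0 = 0"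
  unfolding cnorm_def by simp

lemma cnorm_eq_zero: "cnorm x = 0 \<longleftrightarrow> x = 0"
  by (metis cinner_eq_zero_iff cnorm_sq_complex cnorm_zero of_real_0 zero_power2)

lemma cnorm_pos: "x \<noteq> 0 \<Longrightarrow> 0 < cnorm x"
  using cnorm_eq_zero cnorm_nonneg by (metis order_le_less)

lemma cnorm_one_cinner: "cnorm x = 1 \<Longrightarrow> cinner x x = 1"
  using cnorm_sq_complex[of x] by simp

lemma cnorm_scaleC: "cnorm (c *\<^sub>C x) = cmod c * cnorm x"
proof -
  have "cinner (c *\<^sub>C x) (c *\<^sub>C x) = complex_of_real ((cmod c)^2) * cinner x x"
    using complex_norm_square[of c]
    by (simp add: cinner_scaleC_left cinner_scaleC_right mult.assoc)
  then have "Re (cinner (c *\<^sub>C x) (c *\<^sub>C x)) = (cmod c)^2 * Re (cinner x x)"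
    by (metis Re_complex_of_real cinner_self_real of_real_mult)
  then show ?thesis
    unfolding cnorm_def by (simp add: real_sqrt_mult)
qed

lemma cnorm_normalize:
  assumes "x \<noteq> 0"
  shows "cnorm (complex_of_real (1 / cnorm x) *\<^sub>C x) = 1"
  using cnorm_pos[OF assms] by (simp add: cnorm_scaleC norm_divide)

lemma cnorm_minus_commute: "cnorm (x - y) = cnorm (y - x)"
  using cnorm_scaleC[of "-1" "x - y"] cvs.scale_minus_left[of 1 "x - y"] by (simp add: scaleC_one)

lemma cauchy_schwarz: "cmod (cinner x y) \<le> cnorm x * cnorm y"
proof (cases "y = 0")
  case True
  then show ?thesis by (simp add: cnorm_nonneg)
next
  case False
  define a where "a = cinner x y"
  define b where "b = Re (cinner y y)"
  have b: "b > 0"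
    using cnorm_pos[OF False] cnorm_sq[of y] unfolding b_def by (metis zero_less_power)
  have yy: "cinner y y = of_real b"
    unfolding b_def by (rule cinner_self_real)
  have yx: "cinner y x = cnj a"
    unfolding a_def by (metis cinner_commute)
  define t where "t = a / of_real b"
  have "0 \<le> Re (cinner (x - t *\<^sub>C y) (x - t *\<^sub>C y))"
    by (rule cinner_ge_zero)
  also have "cinner (x - t *\<^sub>C y) (x - t *\<^sub>C y) =
      cinner x x - cnj t * a - t * cnj a + t * cnj t * of_real b"
    by (simp add: cinner_simps a_def[symmetric] yx yy algebra_simps)
  also have "\<dots> = cinner x x - of_real ((cmod a)^2 / b)"
    using b unfolding t_def
    by (simp add: field_simps complex_norm_square[symmetric] power2_eq_square[symmetric])
      (simp add: power2_eq_square algebra_simps)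
  finally have "(cmod a)^2 / b \<le> Re (cinner x x)"
    by simp
  then have "(cmod a)^2 \<le> (cnorm x * cnorm y)^2"
    using b by (simp add: divide_le_eq cnorm_sq power_mult_distrib b_def)
  then show ?thesis
    using cnorm_nonneg unfolding a_def by (meson mult_nonneg_nonneg power2_le_imp_le)
qed

lemma cnorm_triangle: "cnorm (x + y) \<le> cnorm x + cnorm y"
proof -
  have "Re (cinner (x + y) (x + y)) = Re (cinner x x) + Re (cinner y y) + 2 * Re (cinner x y)"
    using cinner_commute[of y x] by (simp add: cinner_add_left cinner_add_right)
  also have "\<dots> \<le> (cnorm x)^2 + (cnorm y)^2 + 2 * (cnorm x * cnorm y)"
    using cauchy_schwarz[of x y] complex_Re_le_cmod[of "cinner x y"] by (simp add: cnorm_sq)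
  also have "\<dots> = (cnorm x + cnorm y)^2"
    by (simp add: power2_sum)
  finally have "(cnorm (x + y))^2 \<le> (cnorm x + cnorm y)^2"
    by (simp add: cnorm_sq)
  then show ?thesis
    using cnorm_nonneg by (meson add_nonneg_nonneg power2_le_imp_le)
qed

lemma pythagoras: "cinner x y = 0 \<Longrightarrow> (cnorm (x + y))^2 = (cnorm x)^2 + (cnorm y)^2"
  using cinner_commute[of y x] by (simp add: cnorm_sq cinner_add_left cinner_add_right)

lemma cspan_csubspace [simp]: "csubspace (cspan S)"
  by (simp add: cspan_eq csubspace_eq)

lemma cspan_base: "a \<in> S \<Longrightarrow> a \<in> cspan S"
  by (simp add: cspan_eq cvs.span_base)

lemma cspan_minimal: "S \<subseteq> T \<Longrightarrow> csubspace T \<Longrightarrow> cspan S \<subseteq> T"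
  by (simp add: cspan_eq csubspace_eq cvs.span_minimal)

lemma cspan_mono: "A \<subseteq> B \<Longrightarrow> cspan A \<subseteq> cspan B"
  by (simp add: cspan_eq cvs.span_mono)

lemma cspan_of_subspace: "csubspace S \<Longrightarrow> cspan S = S"
  by (simp add: cspan_eq csubspace_eq)

lemma cspan_Un_cspan: "cspan (cspan A \<union> S) = cspan (A \<union> S)"
proof
  show "cspan (cspan A \<union> S) \<subseteq> cspan (A \<union> S)"
    by (rule cspan_minimal) (auto intro: cspan_base cspan_mono[THEN subsetD, of A "A \<union> S"])
  show "cspan (A \<union> S) \<subseteq> cspan (cspan A \<union> S)"
    by (rule cspan_mono) (auto intro: cspan_base)
qed

lemma cspan_insert_cspan: "cspan (insert b (cspan B)) = cspan (insert b B)"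
  using cspan_Un_cspan[of B "{b}"] by simp

lemma csubspace_0: "csubspace S \<Longrightarrow> 0 \<in> S"
  by (simp add: csubspace_def)

lemma csubspace_add: "csubspace S \<Longrightarrow> x \<in> S \<Longrightarrow> y \<in> S \<Longrightarrow> x + y \<in> S"
  by (simp add: csubspace_def)

lemma csubspace_scale: "csubspace S \<Longrightarrow> x \<in> S \<Longrightarrow> c *\<^sub>C x \<in> S"
  by (simp add: csubspace_def)

lemma csubspace_diff: "csubspace S \<Longrightarrow> x \<in> S \<Longrightarrow> y \<in> S \<Longrightarrow> x - y \<in> S"
  by (simp add: csubspace_eq cvs.subspace_diff)

lemma csubspace_Int: "csubspace S \<Longrightarrow> csubspace T \<Longrightarrow> csubspace (S \<inter> T)"
  by (simp add: csubspace_def)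

lemma csubspace_cinner_right_zero: "csubspace {v. cinner x v = 0}"
  unfolding csubspace_def by (auto simp: cinner_add_right cinner_scaleC_right)

lemma csubspace_orth: "csubspace (orth S)"
  unfolding csubspace_def orth_def by (auto simp: cinner_add_left cinner_scaleC_left)

lemma orth_cspan: "x \<in> orth S \<Longrightarrow> x \<in> orth (cspan S)"
  using cspan_minimal[OF _ csubspace_cinner_right_zero, of S x] by (auto simp: orth_def)

lemma cinner_cspan_zero:
  assumes "\<And>b. b \<in> B \<Longrightarrow> cinner x b = 0" "k \<in> cspan B"
  shows "cinner x k = 0"
proof -
  have "cspan B \<subseteq> {k. cinner x k = 0}"
    using assms(1) by (intro cspan_minimal[OF _ csubspace_cinner_right_zero]) blast
  from this assms(2) have "k \<in> {k. cinner x k = 0}"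
    by (rule subsetD)
  then show ?thesis
    by simp
qed

lemma cinner_orth_right: "y \<in> orth K \<Longrightarrow> k \<in> K \<Longrightarrow> cinner k y = 0"
  unfolding orth_def by (auto intro: cinner_eq_zero_sym)

lemma mem_orth_self: "x \<in> S \<Longrightarrow> x \<in> orth S \<Longrightarrow> x = 0"
  unfolding orth_def using cinner_eq_zero_iff by blast

lemma fin_dim_cspan: "finite B \<Longrightarrow> fin_dim_subspace (cspan B)"
  unfolding fin_dim_subspace_def using cspan_base by auto

lemma fin_dimE: "fin_dim_subspace V \<Longrightarrow> (\<And>B. finite B \<Longrightarrow> V = cspan B \<Longrightarrow> P) \<Longrightarrow> P"
  unfolding fin_dim_subspace_def by blast

lemma fin_dim_csubspace: "fin_dim_subspace V \<Longrightarrow> csubspace V"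
  unfolding fin_dim_subspace_def by blast

lemma fin_dim_cspan_insert: "fin_dim_subspace K \<Longrightarrow> fin_dim_subspace (cspan (insert y K))"
  by (metis fin_dimE cspan_insert_cspan fin_dim_cspan finite_insert)

definition has_proj :: "'a::complex_inner set \<Rightarrow> bool" where
  "has_proj V \<longleftrightarrow> (\<forall>x. \<exists>y\<in>V. \<forall>v\<in>V. cinner (x - y) v = 0)"

lemma proj_unique:
  assumes V: "csubspace V" and y: "y \<in> V" and orth: "\<forall>v\<in>V. cinner (x - y) v = 0"
  shows "proj V x = y"
  unfolding proj_def
proof (rule the_equality)
  show "y \<in> V \<and> (\<forall>v\<in>V. cinner (x - y) v = 0)"
    using y orth by blast
next
  fix y' assume y': "y' \<in> V \<and> (\<forall>v\<in>V. cinner (x - y') v = 0)"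
  have "y' - y \<in> V"
    using y y' V csubspace_diff by blast
  then have "cinner ((x - y) - (x - y')) (y' - y) = 0"
    using orth y' by (simp only: cinner_diff_left) simp
  then have "cinner (y' - y) (y' - y) = 0"
    by simp
  then show "y' = y"
    using cinner_eq_zero_iff[of "y' - y"] by simp
qed

lemma proj_mem: "has_proj V \<Longrightarrow> csubspace V \<Longrightarrow> proj V x \<in> V"
  and proj_residual_orth: "has_proj V \<Longrightarrow> csubspace V \<Longrightarrow> v \<in> V \<Longrightarrow> cinner (x - proj V x) v = 0"
  by (metis has_proj_def proj_unique)+

lemma proj_id: "csubspace V \<Longrightarrow> v \<in> V \<Longrightarrow> proj V v = v"
  by (rule proj_unique) auto

lemma proj_add:
  assumes "csubspace V" "has_proj V"
  shows "proj V (x + y) = proj V x + proj V y"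
proof (rule proj_unique[OF assms(1)])
  show "proj V x + proj V y \<in> V"
    using proj_mem[OF assms(2,1)] csubspace_add[OF assms(1)] by blast
  have "x + y - (proj V x + proj V y) = (x - proj V x) + (y - proj V y)"
    by (simp add: algebra_simps)
  then show "\<forall>v\<in>V. cinner (x + y - (proj V x + proj V y)) v = 0"
    by (simp only:) (simp add: cinner_add_left proj_residual_orth[OF assms(2,1)])
qed

lemma proj_scale:
  assumes "csubspace V" "has_proj V"
  shows "proj V (c *\<^sub>C x) = c *\<^sub>C proj V x"
proof (rule proj_unique[OF assms(1)])
  show "c *\<^sub>C proj V x \<in> V"
    using proj_mem[OF assms(2,1)] csubspace_scale[OF assms(1)] by blast
  show "\<forall>v\<in>V. cinner (c *\<^sub>C x - c *\<^sub>C proj V x) v = 0"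
    using proj_residual_orth[OF assms(2,1)]
    by (simp add: cvs.scale_right_diff_distrib[symmetric] cinner_scaleC_left)
qed

lemma proj_diff:
  assumes "csubspace V" "has_proj V"
  shows "proj V (x - y) = proj V x - proj V y"
  using proj_add[OF assms, of "x - y" y] by simp

lemma cnorm_proj_le:
  assumes "csubspace V" "has_proj V"
  shows "cnorm (proj V x) \<le> cnorm x"
proof -
  have "cinner (proj V x) (x - proj V x) = 0"
    using proj_residual_orth[OF assms(2,1) proj_mem[OF assms(2,1)]] by (rule cinner_eq_zero_sym)
  then have "(cnorm x)^2 = (cnorm (proj V x))^2 + (cnorm (x - proj V x))^2"
    using pythagoras by fastforce
  then show ?thesis
    using cnorm_nonneg by (metis le_add_same_cancel1 power2_le_imp_le zero_le_power2)
qed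

lemma cnorm_proj_residual_mono:
  assumes V: "csubspace V" "has_proj V" and H: "csubspace H" "has_proj H" and "V \<subseteq> H"
  shows "cnorm (x - proj H x) \<le> cnorm (x - proj V x)"
proof -
  have "proj H x - proj V x \<in> H"
    using proj_mem[OF H(2,1)] proj_mem[OF V(2,1)] \<open>V \<subseteq> H\<close> csubspace_diff[OF H(1)] by blast
  then have "(cnorm ((x - proj H x) + (proj H x - proj V x)))^2
      = (cnorm (x - proj H x))^2 + (cnorm (proj H x - proj V x))^2"
    using pythagoras proj_residual_orth[OF H(2,1)] by blast
  then have "(cnorm (x - proj H x))^2 \<le> (cnorm (x - proj V x))^2"
    by simp
  then show ?thesis
    using cnorm_nonneg by (meson power2_le_imp_le)
qed

lemma proj_insert_orth:
  assumes K: "csubspace K" "has_proj K" and y: "y \<in> orth K" "cnorm y = 1"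
  shows "has_proj (cspan (insert y K))"
    and "proj (cspan (insert y K)) x = proj K x + cinner x y *\<^sub>C y"
proof -
  let ?K = "cspan (insert y K)"
  have residual: "\<forall>v\<in>?K. cinner (x - (proj K x + cinner x y *\<^sub>C y)) v = 0" for x
  proof -
    have "cinner (x - (proj K x + cinner x y *\<^sub>C y)) k = 0" if "k \<in> K" for k
      using proj_residual_orth[OF K(2,1) that, of x] y(1) that
      by (simp add: orth_def cinner_simps)
    moreover have "cinner (x - (proj K x + cinner x y *\<^sub>C y)) y = 0"
      using cinner_orth_right[OF y(1) proj_mem[OF K(2,1)]] cnorm_one_cinner[OF y(2)]
      by (simp add: cinner_simps)
    ultimately have "x - (proj K x + cinner x y *\<^sub>C y) \<in> orth (insert y K)"
      by (auto simp: orth_def)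
    then have "x - (proj K x + cinner x y *\<^sub>C y) \<in> orth ?K"
      by (rule orth_cspan)
    then show ?thesis
      by (simp add: orth_def)
  qed
  have mem: "proj K x + cinner x y *\<^sub>C y \<in> ?K" for x
    by (meson cspan_base cspan_csubspace csubspace_add csubspace_scale insertCI proj_mem[OF K(2,1)])
  show "has_proj ?K"
    unfolding has_proj_def using residual mem by blast
  show "proj ?K x = proj K x + cinner x y *\<^sub>C y"
    using proj_unique[OF cspan_csubspace mem residual] .
qed

lemma gram_schmidt_step:
  assumes K: "csubspace K" "has_proj K" and b: "b \<notin> K"
  obtains y where "y \<in> orth K" "cnorm y = 1" "cspan (insert b K) = cspan (insert y K)"
proof -
  define e where "e = b - proj K b"
  have "e \<noteq> 0"
    using b proj_mem[OF K(2,1), of b] unfolding e_def by auto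
  define y where "y = complex_of_real (1 / cnorm e) *\<^sub>C e"
  have "cnorm y = 1"
    unfolding y_def using cnorm_normalize[OF \<open>e \<noteq> 0\<close>] .
  have "e \<in> orth K"
    using proj_residual_orth[OF K(2,1)] unfolding e_def orth_def by auto
  then have "y \<in> orth K"
    using csubspace_orth csubspace_scale unfolding y_def by blast
  have b_eq: "b = proj K b + complex_of_real (cnorm e) *\<^sub>C y"
    using cnorm_pos[OF \<open>e \<noteq> 0\<close>] unfolding y_def e_def by (simp add: scaleC_scaleC scaleC_one)
  have "b \<in> cspan (insert y K)"
    by (subst b_eq) (meson cspan_base cspan_csubspace csubspace_add csubspace_scale insertCI
        proj_mem[OF K(2,1)])
  then have "cspan (insert b K) \<subseteq> cspan (insert y K)"
    by (simp add: cspan_base cspan_minimal subsetI)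
  moreover have "y \<in> cspan (insert b K)"
    unfolding y_def e_def
    by (meson cspan_base cspan_csubspace csubspace_diff csubspace_scale insertCI proj_mem[OF K(2,1)])
  then have "cspan (insert y K) \<subseteq> cspan (insert b K)"
    by (simp add: cspan_base cspan_minimal subsetI)
  ultimately show ?thesis
    using that \<open>y \<in> orth K\<close> \<open>cnorm y = 1\<close> by blast
qed

lemma fin_dim_subspace_induct_aux:
  assumes "finite B" and zero: "P {0}"
    and step: "\<And>K y. fin_dim_subspace K \<Longrightarrow> has_proj K \<Longrightarrow> P K \<Longrightarrow> y \<in> orth K \<Longrightarrow> cnorm y = 1 \<Longrightarrow>
      P (cspan (insert y K))"
  shows "has_proj (cspan B) \<and> P (cspan B)"
  using \<open>finite B\<close>
proof (induction B rule: finite_induct)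
  case empty
  have "has_proj {0}"
    unfolding has_proj_def by auto
  then show ?case
    using zero by (simp add: cspan_eq)
next
  case (insert b B)
  show ?case
  proof (cases "b \<in> cspan B")
    case True
    then have "cspan (insert b B) = cspan B"
      by (simp add: cspan_eq cvs.span_redundant)
    then show ?thesis
      using insert by simp
  next
    case False
    obtain y where y: "y \<in> orth (cspan B)" "cnorm y = 1"
      "cspan (insert b (cspan B)) = cspan (insert y (cspan B))"
      using gram_schmidt_step[OF cspan_csubspace _ False] insert.IH by blast
    then show ?thesis
      using proj_insert_orth(1)[OF cspan_csubspace _ y(1,2)] step[OF fin_dim_cspan[OF insert(1)] _ _ y(1,2)]
        insert.IH by (simp add: cspan_insert_cspan)
  qed
qed

lemma fin_dim_subspace_induct [consumes 1, case_names zero step]: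
  assumes "fin_dim_subspace S" "P {0}"
    and "\<And>K y. fin_dim_subspace K \<Longrightarrow> has_proj K \<Longrightarrow> P K \<Longrightarrow> y \<in> orth K \<Longrightarrow> cnorm y = 1 \<Longrightarrow>
      P (cspan (insert y K))"
  shows "P S"
proof -
  obtain B where "finite B" "S = cspan B"
    using assms(1) by (rule fin_dimE)
  then show ?thesis
    using fin_dim_subspace_induct_aux[of B P] assms(2,3) by blast
qed

lemma fin_dim_has_proj: "fin_dim_subspace V \<Longrightarrow> has_proj V"
  by (metis fin_dimE fin_dim_subspace_induct_aux[where P = "\<lambda>_. True"])

lemma clinear_on_csubspace: "clinear_on D T \<Longrightarrow> csubspace D"
  by (simp add: clinear_on_def)

lemma clinear_on_add: "clinear_on D T \<Longrightarrow> x \<in> D \<Longrightarrow> y \<in> D \<Longrightarrow> T (x + y) = T x + T y"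
  by (simp add: clinear_on_def)

lemma clinear_on_scale: "clinear_on D T \<Longrightarrow> x \<in> D \<Longrightarrow> T (c *\<^sub>C x) = c *\<^sub>C T x"
  by (simp add: clinear_on_def)

lemma clinear_on_zero: "clinear_on D T \<Longrightarrow> T 0 = 0"
  by (metis clinear_on_csubspace clinear_on_scale csubspace_0 scaleC_zero_left)

lemma clinear_on_diff:
  assumes "clinear_on D T" "x \<in> D" "y \<in> D"
  shows "T (x - y) = T x - T y"
proof -
  have "x - y \<in> D"
    using assms csubspace_diff clinear_on_csubspace by blast
  then have "T (x - y) + T y = T x"
    using clinear_on_add[OF assms(1) _ assms(3), of "x - y"] by simp
  then show ?thesis
    by (simp add: eq_diff_eq)
qed

lemma clinear_on_combination:
  "clinear_on D T \<Longrightarrow> x \<in> D \<Longrightarrow> y \<in> D \<Longrightarrow> T (a *\<^sub>C x + b *\<^sub>C y) = a *\<^sub>C T x + b *\<^sub>C T y"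
  by (simp add: clinear_on_add clinear_on_csubspace clinear_on_scale csubspace_scale)

lemma clinear_on_subset: "clinear_on D T \<Longrightarrow> csubspace S \<Longrightarrow> S \<subseteq> D \<Longrightarrow> clinear_on S T"
  unfolding clinear_on_def by blast

lemma clinear_on_shift: "clinear_on K L \<Longrightarrow> clinear_on K (\<lambda>x. L x - l *\<^sub>C x)"
  unfolding clinear_on_def
  by (simp add: cvs.scale_right_distrib cvs.scale_scale algebra_simps mult.commute)

lemma clinear_on_scaleC_op: "clinear_on K L \<Longrightarrow> clinear_on K (\<lambda>x. c *\<^sub>C L x)"
  unfolding clinear_on_def by (simp add: cvs.scale_right_distrib cvs.scale_scale mult.commute)

lemma csubspace_cinner_image_zero:
  assumes "clinear_on D T"
  shows "csubspace {v \<in> D. cinner (T v) x = 0}"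
  using assms clinear_on_zero[OF assms] csubspace_0[OF clinear_on_csubspace[OF assms]]
  unfolding csubspace_def clinear_on_def by (auto simp: cinner_add_left cinner_scaleC_left)

lemma cinner_image_cspan_zero:
  assumes T: "clinear_on D T" and "B \<subseteq> D" "\<And>b. b \<in> B \<Longrightarrow> cinner (T b) x = 0" "k \<in> cspan B"
  shows "cinner (T k) x = 0"
proof -
  have "cspan B \<subseteq> {k \<in> D. cinner (T k) x = 0}"
    using assms(2,3) by (intro cspan_minimal[OF _ csubspace_cinner_image_zero[OF T]]) blast
  from this assms(4) have "k \<in> {k \<in> D. cinner (T k) x = 0}"
    by (rule subsetD)
  then show ?thesis
    by simp
qed

lemma fin_dim_inj_imp_surj:
  fixes K :: "'a::complex_inner set"
  assumes K: "fin_dim_subspace K" and L: "clinear_on K L" and LK: "\<forall>h\<in>K. L h \<in> K"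
    and inj: "inj_on L K"
  shows "L ` K = K"
proof -
  have Ks: "csubspace K" and Kp: "has_proj K"
    using K fin_dim_csubspace fin_dim_has_proj by auto
  define g where "g = (\<lambda>x. L (proj K x))"
  interpret g: Vector_Spaces.linear "scaleC::complex\<Rightarrow>'a\<Rightarrow>'a" scaleC g
    unfolding Vector_Spaces.linear_iff g_def
    using clinear_on_add[OF L] clinear_on_scale[OF L] proj_add[OF Ks Kp] proj_scale[OF Ks Kp]
      proj_mem[OF Kp Ks] cvs.vector_space_axioms by simp
  have gK: "\<And>x. x \<in> K \<Longrightarrow> g x = L x"
    unfolding g_def using proj_id[OF Ks] by simp
  obtain B where B: "finite B" "K = cspan B"
    using K by (rule fin_dimE)
  obtain E where E: "E \<subseteq> K" "cvs.independent E" "K \<subseteq> cvs.span E" "card E = cvs.dim K"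
    using cvs.basis_exists by blast
  have spanE: "cvs.span E = K"
    using E Ks cvs.span_minimal[of E K] by (auto simp: csubspace_eq)
  have finE: "finite E"
    using cvs.independent_span_bound[OF B(1) E(2)] E(1) B(2) by (simp add: cspan_eq)
  have injg: "inj_on g (cvs.span E)"
    unfolding spanE using inj gK by (simp add: inj_on_def)
  have indep: "cvs.independent (g ` E)"
    using g.independent_injective_image[OF E(2) injg] .
  have img: "cvs.span (g ` E) = L ` K"
    using g.span_image[of E] unfolding spanE using gK by auto
  have card_gE: "card (g ` E) = card E"
    using card_image injg cvs.span_superset[of E] by (meson inj_on_subset)
  show "L ` K = K"
  proof (rule ccontr)
    assume "L ` K \<noteq> K"
    then obtain y where y: "y \<in> K" "y \<notin> L ` K"
      using LK by blast
    have "cvs.independent (insert y (g ` E))"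
      using cvs.independent_insertI[OF _ indep] y img by simp
    moreover have "insert y (g ` E) \<subseteq> cvs.span E"
      unfolding spanE using y(1) E(1) LK gK by auto
    ultimately have "card (insert y (g ` E)) \<le> card E"
      using cvs.independent_span_bound[OF finE] by blast
    moreover have "y \<notin> g ` E"
      using y img cvs.span_superset[of "g ` E"] by blast
    then have "card (insert y (g ` E)) = card E + 1"
      using finE card_gE by simp
    ultimately show False
      by simp
  qed
qed

lemma fin_dim_linear_bounded:
  assumes "fin_dim_subspace K"
  shows "clinear_on K L \<Longrightarrow> \<exists>C\<ge>0. \<forall>h\<in>K. cnorm (L h) \<le> C * cnorm h"
  using assms
proof (induction arbitrary: L rule: fin_dim_subspace_induct)
  case zero
  then show ?case
    using clinear_on_zero by fastforce
next
  case (step K y)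
  have Ks: "csubspace K"
    using fin_dim_csubspace[OF step.hyps(1)] .
  let ?K = "cspan (insert y K)"
  have "K \<subseteq> ?K" "y \<in> ?K"
    by (auto intro: cspan_base)
  obtain C where C: "C \<ge> 0" "\<forall>h\<in>K. cnorm (L h) \<le> C * cnorm h"
    using step.IH clinear_on_subset[OF step.prems Ks \<open>K \<subseteq> ?K\<close>] by blast
  have "cnorm (L h) \<le> (C + cnorm (L y)) * cnorm h" if h: "h \<in> ?K" for h
  proof -
    have pK: "proj K h \<in> K"
      using proj_mem[OF step.hyps(2) Ks] .
    have "h = proj K h + cinner h y *\<^sub>C y"
      using proj_id[OF cspan_csubspace h] proj_insert_orth(2)[OF Ks step.hyps(2,3,4)] by simp
    then have "L h = L (proj K h) + cinner h y *\<^sub>C L y"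
      by (metis \<open>K \<subseteq> ?K\<close> \<open>y \<in> ?K\<close> clinear_on_add clinear_on_scale cspan_csubspace csubspace_scale
          pK step.prems subsetD)
    then have "cnorm (L h) \<le> cnorm (L (proj K h)) + cmod (cinner h y) * cnorm (L y)"
      using cnorm_triangle cnorm_scaleC by metis
    also have "\<dots> \<le> C * cnorm h + cnorm h * cnorm (L y)"
    proof (rule add_mono)
      show "cnorm (L (proj K h)) \<le> C * cnorm h"
        using C pK cnorm_proj_le[OF Ks step.hyps(2), of h] by (meson mult_left_mono order_trans)
      show "cmod (cinner h y) * cnorm (L y) \<le> cnorm h * cnorm (L y)"
        using cauchy_schwarz[of h y] step.hyps(4) cnorm_nonneg[of "L y"] by (simp add: mult_right_mono)
    qed
    finally show ?thesis
      by (simp add: algebra_simps)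
  qed
  then show ?case
    using C(1) cnorm_nonneg[of "L y"] by (meson add_nonneg_nonneg)
qed

lemma clinear_on_inj_iff:
  assumes M: "clinear_on K M"
  shows "inj_on M K \<longleftrightarrow> (\<forall>h\<in>K. M h = 0 \<longrightarrow> h = 0)"
proof
  assume "inj_on M K"
  then show "\<forall>h\<in>K. M h = 0 \<longrightarrow> h = 0"
    using clinear_on_zero[OF M] csubspace_0[OF clinear_on_csubspace[OF M]] unfolding inj_on_def by metis
next
  assume ker: "\<forall>h\<in>K. M h = 0 \<longrightarrow> h = 0"
  show "inj_on M K"
  proof (rule inj_onI)
    fix a b assume ab: "a \<in> K" "b \<in> K" "M a = M b"
    then have "M (a - b) = 0"
      using clinear_on_diff[OF M] by simp
    then show "a = b"
      using ker csubspace_diff[OF clinear_on_csubspace[OF M] ab(1,2)] by (metis eq_iff_diff_eq_0)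
  qed
qed

lemma clinear_on_inv_into:
  assumes M: "clinear_on K M" and bij: "bij_betw M K K"
  shows "clinear_on K (inv_into K M)"
proof -
  have K: "csubspace K" and inj: "inj_on M K"
    using clinear_on_csubspace[OF M] bij_betw_imp_inj_on[OF bij] .
  have R: "inv_into K M a \<in> K" "M (inv_into K M a) = a" if "a \<in> K" for a
    using that bij by (auto simp: bij_betw_def inv_into_into f_inv_into_f)
  show ?thesis
    unfolding clinear_on_def
  proof (intro conjI ballI allI)
    show "csubspace K"
      by (rule K)
  next
    fix a b assume "a \<in> K" "b \<in> K"
    then show "inv_into K M (a + b) = inv_into K M a + inv_into K M b"
      using clinear_on_add[OF M R(1) R(1)] R(2) inv_into_f_f[OF inj csubspace_add[OF K R(1) R(1)]]
      by metis
  next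
    fix c a assume "a \<in> K"
    then show "inv_into K M (c *\<^sub>C a) = c *\<^sub>C inv_into K M a"
      using clinear_on_scale[OF M R(1)] R(2) inv_into_f_f[OF inj csubspace_scale[OF K R(1)]] by metis
  qed
qed

lemma fin_dim_resolvent_set_iff:
  assumes K: "fin_dim_subspace K" and L: "clinear_on K L" and LK: "\<forall>h\<in>K. L h \<in> K"
  shows "l \<in> resolvent_set K K L \<longleftrightarrow> (\<forall>h\<in>K. L h - l *\<^sub>C h = 0 \<longrightarrow> h = 0)"
proof -
  define M where "M = (\<lambda>x. L x - l *\<^sub>C x)"
  have M: "clinear_on K M"
    unfolding M_def by (rule clinear_on_shift[OF L])
  have MK: "\<forall>h\<in>K. M h \<in> K"
    unfolding M_def using LK fin_dim_csubspace[OF K] csubspace_diff csubspace_scale by blast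
  show ?thesis
  proof
    assume "l \<in> resolvent_set K K L"
    then show "\<forall>h\<in>K. L h - l *\<^sub>C h = 0 \<longrightarrow> h = 0"
      using clinear_on_inj_iff[OF M] unfolding resolvent_set_def M_def by (auto dest: bij_betw_imp_inj_on)
  next
    assume "\<forall>h\<in>K. L h - l *\<^sub>C h = 0 \<longrightarrow> h = 0"
    then have bij: "bij_betw M K K"
      using clinear_on_inj_iff[OF M] fin_dim_inj_imp_surj[OF K M MK] unfolding M_def
      by (simp add: bij_betw_def)
    obtain C where "\<forall>h\<in>K. cnorm (inv_into K M h) \<le> C * cnorm h"
      using fin_dim_linear_bounded[OF K clinear_on_inv_into[OF M bij]] by blast
    then show "l \<in> resolvent_set K K L"
      unfolding resolvent_set_def resolvent_def using bij unfolding M_def by blast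
  qed
qed

lemma compr_clinear_on:
  assumes T: "clinear_on D T" and K: "fin_dim_subspace K" "K \<subseteq> D"
  shows "clinear_on K (compr K T)" and "\<forall>h\<in>K. compr K T h \<in> K"
proof -
  have Ks: "csubspace K" and Kp: "has_proj K"
    using K(1) fin_dim_csubspace fin_dim_has_proj by auto
  show "\<forall>h\<in>K. compr K T h \<in> K"
    unfolding compr_def using proj_mem[OF Kp Ks] by blast
  show "clinear_on K (compr K T)"
    using Ks K(2) clinear_on_add[OF T] clinear_on_scale[OF T] proj_add[OF Ks Kp] proj_scale[OF Ks Kp]
    unfolding clinear_on_def compr_def by (auto simp: subset_iff)
qed

definition compr_eigenvalues :: "'a::complex_inner set \<Rightarrow> ('a \<Rightarrow> 'a) \<Rightarrow> complex set" where
  "compr_eigenvalues K T = {l. \<exists>h\<in>K. h \<noteq> 0 \<and> proj K (T h) = l *\<^sub>C h}"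

lemma compr_spectrum_eq_eigenvalues:
  assumes "clinear_on D T" "fin_dim_subspace K" "K \<subseteq> D"
  shows "compr_spectrum K T = compr_eigenvalues K T"
  using fin_dim_resolvent_set_iff[OF assms(2) compr_clinear_on[OF assms]]
  unfolding compr_spectrum_def op_spectrum_def compr_eigenvalues_def compr_def by auto

section \<open>Convexity of the numerical range\<close>

lemma cinner_image_scale:
  "clinear_on S T \<Longrightarrow> v \<in> S \<Longrightarrow> cinner (T (c *\<^sub>C v)) (c *\<^sub>C v) = c * cnj c * cinner (T v) v"
  by (simp add: clinear_on_scale cinner_scaleC_left cinner_scaleC_right mult.assoc)

lemma rayleigh_quotient_in_numrange:
  assumes T: "clinear_on S T" and z: "z \<in> S" "z \<noteq> 0"
  shows "cinner (T z) z / cinner z z \<in> numrange S T"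
proof -
  define c where "c = complex_of_real (1 / cnorm z)"
  have "c * cnj c * cinner z z = 1"
    using cnorm_pos[OF z(2)] unfolding c_def cnorm_sq_complex[symmetric]
    by (simp add: power2_eq_square field_simps)
  moreover have "cinner z z \<noteq> 0"
    using z(2) cinner_eq_zero_iff[of z] by simp
  ultimately have "c * cnj c = 1 / cinner z z"
    by (simp add: field_simps)
  then have "cinner (T (c *\<^sub>C z)) (c *\<^sub>C z) = cinner (T z) z / cinner z z"
    using cinner_image_scale[OF T z(1)] by simp
  moreover have "c *\<^sub>C z \<in> S" "cnorm (c *\<^sub>C z) = 1"
    using csubspace_scale[OF clinear_on_csubspace[OF T] z(1)] cnorm_normalize[OF z(2)]
    unfolding c_def by auto
  ultimately show ?thesis
    unfolding numrange_def by (metis (mono_tags, lifting) mem_Collect_eq)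
qed

lemma exists_unimodular_Im_eq_zero: "\<exists>\<omega>. cmod \<omega> = 1 \<and> Im (\<omega> * p + cnj \<omega> * r) = 0"
proof -
  define q where "q = p - cnj r"
  define \<omega> where "\<omega> = (if q = 0 then 1 else cnj q / of_real (cmod q))"
  have "Im (\<omega> * q) = 0"
    by (cases "q = 0") (auto simp: \<omega>_def field_simps complex_norm_square[symmetric] power2_eq_square)
  moreover have "Im (\<omega> * p + cnj \<omega> * r) = Im (\<omega> * q)"
    by (simp add: q_def algebra_simps)
  moreover have "cmod \<omega> = 1"
    by (auto simp: \<omega>_def norm_divide)
  ultimately show ?thesis
    by metis
qed

lemma phase_rotation_real_cross_terms:
  assumes T: "clinear_on S T" and x: "x \<in> S" "cnorm x = 1" and Tx: "cinner (T x) x = 0"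
  obtains x' where "x' \<in> S" "cinner x' x' = 1" "cinner (T x') x' = 0"
    "Im (cinner (T x') y + cinner (T y) x') = 0"
proof -
  obtain \<omega> where \<omega>: "cmod \<omega> = 1" "Im (\<omega> * cinner (T x) y + cnj \<omega> * cinner (T y) x) = 0"
    using exists_unimodular_Im_eq_zero by blast
  have \<omega>\<omega>: "\<omega> * cnj \<omega> = 1" "cnj \<omega> * \<omega> = 1"
    using \<omega>(1) complex_norm_square[of \<omega>] by (simp_all add: mult.commute)
  have "\<omega> *\<^sub>C x \<in> S" "cinner (\<omega> *\<^sub>C x) (\<omega> *\<^sub>C x) = 1" "cinner (T (\<omega> *\<^sub>C x)) (\<omega> *\<^sub>C x) = 0"
    using csubspace_scale[OF clinear_on_csubspace[OF T] x(1)] \<omega>\<omega> cnorm_one_cinner[OF x(2)]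
      cinner_image_scale[OF T x(1)] Tx
    by (auto simp: cinner_scaleC_left cinner_scaleC_right mult.assoc)
  moreover have "Im (cinner (T (\<omega> *\<^sub>C x)) y + cinner (T y) (\<omega> *\<^sub>C x)) = 0"
    using \<omega>(2) by (simp add: clinear_on_scale[OF T x(1)] cinner_scaleC_left cinner_scaleC_right)
  ultimately show ?thesis
    using that by blast
qed

lemma segment_nonzero:
  assumes T: "clinear_on S T" and x: "x \<in> S" "x \<noteq> 0" and y: "y \<in> S"
    and Tx: "cinner (T x) x = 0" and Ty: "cinner (T y) y = 1"
  shows "complex_of_real (1 - t) *\<^sub>C x + complex_of_real t *\<^sub>C y \<noteq> 0"
proof
  assume z: "complex_of_real (1 - t) *\<^sub>C x + complex_of_real t *\<^sub>C y = 0"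
  then have ty: "complex_of_real t *\<^sub>C y = complex_of_real (t - 1) *\<^sub>C x"
    by (metis add.commute add_eq_0_iff cvs.scale_minus_left minus_diff_eq of_real_diff)
  have "complex_of_real (t^2) = complex_of_real (t - 1) * cnj (complex_of_real (t - 1)) * 0"
    using cinner_image_scale[OF T y, of "complex_of_real t"]
      cinner_image_scale[OF T x(1), of "complex_of_real (t - 1)"] Ty Tx
    unfolding ty by (simp add: power2_eq_square)
  then have "t = 0"
    by simp
  then show False
    using z x(2) by (simp add: scaleC_one)
qed

text \<open>The core of the Toeplitz--Hausdorff theorem: once the cross terms are real, the quadratic
  form of \<open>T\<close> on the real segment from \<open>x\<close> to \<open>y\<close> is real, so the Rayleigh quotient runs
  continuously from \<open>0\<close> to \<open>1\<close>.\<close>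

lemma numrange_unit_interval:
  assumes T: "clinear_on S T" and x: "x \<in> S" "cnorm x = 1" and y: "y \<in> S" "cnorm y = 1"
    and Tx: "cinner (T x) x = 0" and Ty: "cinner (T y) y = 1" and \<tau>: "0 \<le> \<tau>" "\<tau> \<le> 1"
  shows "complex_of_real \<tau> \<in> numrange S T"
proof -
  obtain x' where x': "x' \<in> S" "cinner x' x' = 1" "cinner (T x') x' = 0"
    and cross: "Im (cinner (T x') y + cinner (T y) x') = 0"
    using phase_rotation_real_cross_terms[OF T x Tx] by blast
  have "x' \<noteq> 0"
    using x'(2) by auto
  define \<gamma> where "\<gamma> = Re (cinner (T x') y + cinner (T y) x')"
  have \<gamma>: "cinner (T x') y + cinner (T y) x' = complex_of_real \<gamma>"
    using cross unfolding \<gamma>_def by (simp add: complex_eq_iff)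
  define g where "g = Re (cinner x' y)"
  have g: "cinner x' y + cinner y x' = complex_of_real (2 * g)"
    using cinner_commute[of y x'] unfolding g_def by (simp add: complex_eq_iff)
  define z where "z = (\<lambda>t::real. complex_of_real (1 - t) *\<^sub>C x' + complex_of_real t *\<^sub>C y)"
  have zS: "z t \<in> S" for t
    unfolding z_def using clinear_on_csubspace[OF T] x'(1) y(1) csubspace_add csubspace_scale by blast
  define N where "N = (\<lambda>t::real. (1 - t)^2 + 2 * (1 - t) * t * g + t^2)"
  have zz: "cinner (z t) (z t) = complex_of_real (N t)" for t
  proof -
    have "cinner (z t) (z t) = of_real ((1 - t)^2) + of_real ((1 - t) * t) * (cinner x' y + cinner y x')
        + of_real (t^2)"
      unfolding z_def using x'(2) cnorm_one_cinner[OF y(2)]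
      by (simp add: cinner_simps power2_eq_square algebra_simps)
    then show ?thesis
      unfolding g N_def by simp
  qed
  have Tzz: "cinner (T (z t)) (z t) = complex_of_real ((1 - t) * t * \<gamma> + t^2)" for t
  proof -
    have "cinner (T (z t)) (z t) = of_real ((1 - t) * t) * (cinner (T x') y + cinner (T y) x')
        + of_real (t^2)"
      unfolding z_def clinear_on_combination[OF T x'(1) y(1)] using x'(3) Ty
      by (simp add: cinner_simps power2_eq_square algebra_simps)
    then show ?thesis
      unfolding \<gamma> by simp
  qed
  have z_nonzero: "z t \<noteq> 0" for t
    unfolding z_def using segment_nonzero[OF T x'(1) \<open>x' \<noteq> 0\<close> y(1) x'(3) Ty] .
  have "N t > 0" for t
    using cnorm_pos[OF z_nonzero] cnorm_sq[of "z t"] zz[of t] by (metis Re_complex_of_real zero_less_power)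
  then have N_nonzero: "N t \<noteq> 0" for t
    by (metis less_irrefl)
  define f where "f = (\<lambda>t. ((1 - t) * t * \<gamma> + t^2) / N t)"
  have "continuous_on {0..1} f"
    unfolding f_def using N_nonzero unfolding N_def by (intro continuous_intros) auto
  moreover have "f 0 = 0" "f 1 = 1"
    unfolding f_def N_def by simp_all
  ultimately obtain t where t: "0 \<le> t" "t \<le> 1" "f t = \<tau>"
    using IVT'[of f 0 \<tau> 1] \<tau> by auto
  have "cinner (T (z t)) (z t) / cinner (z t) (z t) = complex_of_real \<tau>"
    using t(3) unfolding Tzz zz f_def by (metis of_real_divide)
  then show ?thesis
    using rayleigh_quotient_in_numrange[OF T zS[of t] z_nonzero[of t]] by simp
qed

lemma numrange_convex:
  assumes T: "clinear_on S T"
  shows "convex (numrange S T)"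
  unfolding convex_def
proof (intro ballI allI impI)
  fix p q :: complex and u v :: real
  assume p: "p \<in> numrange S T" and q: "q \<in> numrange S T" and uv: "0 \<le> u" "0 \<le> v" "u + v = 1"
  obtain x where x: "x \<in> S" "cnorm x = 1" "p = cinner (T x) x"
    using p unfolding numrange_def by blast
  obtain y where y: "y \<in> S" "cnorm y = 1" "q = cinner (T y) y"
    using q unfolding numrange_def by blast
  have "u = 1 - v"
    using uv(3) by simp
  then have uv_eq: "u *\<^sub>R p + v *\<^sub>R q = p + complex_of_real v * (q - p)"
    unfolding \<open>u = 1 - v\<close> by (simp add: scaleR_conv_of_real algebra_simps)
  show "u *\<^sub>R p + v *\<^sub>R q \<in> numrange S T"
  proof (cases "p = q")
    case True
    then show ?thesis
      using p uv_eq by simp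
  next
    case False
    define T' where "T' = (\<lambda>w. (1 / (q - p)) *\<^sub>C (T w - p *\<^sub>C w))"
    have T': "clinear_on S T'"
      unfolding T'_def by (intro clinear_on_scaleC_op clinear_on_shift T)
    have T'_form: "cinner (T' w) w = (cinner (T w) w - p) / (q - p)" if "cnorm w = 1" for w
      using cnorm_one_cinner[OF that] unfolding T'_def by (simp add: cinner_simps divide_simps)
    obtain w where w: "w \<in> S" "cnorm w = 1" "cinner (T' w) w = complex_of_real v"
      using numrange_unit_interval[OF T' x(1,2) y(1,2) _ _ uv(2)] uv T'_form[OF x(2)] T'_form[OF y(2)]
        x(3) y(3) False unfolding numrange_def by auto
    then have "cinner (T w) w = p + complex_of_real v * (q - p)"
      using T'_form[OF w(2)] False by (simp add: field_simps)
    then show ?thesis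
      unfolding uv_eq numrange_def using w(1,2) by (auto intro!: exI[of _ w])
  qed
qed

lemma interior_W_e1_subset_numrange:
  assumes T: "clinear_on D T" and U: "fin_dim_subspace U"
  shows "interior (W_e1 D T) \<subseteq> numrange (orth U \<inter> D) T"
proof -
  let ?S = "orth U \<inter> D"
  have "clinear_on ?S T"
    using clinear_on_subset[OF T csubspace_Int[OF csubspace_orth clinear_on_csubspace[OF T]]] by blast
  have "W_e1 D T \<subseteq> closure (numrange ?S T)"
    unfolding W_e1_def using U by blast
  then have "interior (W_e1 D T) \<subseteq> interior (closure (numrange ?S T))"
    by (rule interior_mono)
  also have "\<dots> = interior (numrange ?S T)"
    using convex_interior_closure[OF numrange_convex[OF \<open>clinear_on ?S T\<close>]] .
  finally show ?thesis
    using interior_subset by blast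
qed

lemma W_e1_approx:
  assumes "fin_dim_subspace U" "\<omega> \<in> W_e1 D T" "e > 0"
  obtains x where "x \<in> orth U \<inter> D" "cnorm x = 1" "dist (cinner (T x) x) \<omega> < e"
proof -
  have "\<omega> \<in> closure (numrange (orth U \<inter> D) T)"
    using assms(1,2) unfolding W_e1_def by blast
  then obtain \<mu> where "\<mu> \<in> numrange (orth U \<inter> D) T" "dist \<mu> \<omega> < e"
    using assms(3) closure_approachable by blast
  then show ?thesis
    using that unfolding numrange_def by blast
qed

section \<open>Triangular extensions of a subspace\<close>

text \<open>A unit vector \<open>y \<in> D\<close> orthogonal to \<open>K\<close> and to \<open>T K\<close>: in \<open>span (K \<union> {y})\<close> the compression of \<open>T\<close>
  is block upper triangular, with the single new diagonal entry \<open>\<langle>T y, y\<rangle>\<close>.\<close>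

locale orth_step =
  fixes T :: "'a::complex_inner \<Rightarrow> 'a" and D K y
  assumes T: "clinear_on D T" and K: "fin_dim_subspace K" "K \<subseteq> D"
    and y: "y \<in> D" "cnorm y = 1" "y \<in> orth K"
    and T_K_orth_y: "\<forall>k\<in>K. cinner (T k) y = 0"
begin

abbreviation K' :: "'a set" where
  "K' \<equiv> cspan (insert y K)"

lemma K_csubspace: "csubspace K"
  using fin_dim_csubspace[OF K(1)] .

lemma K_has_proj: "has_proj K"
  using fin_dim_has_proj[OF K(1)] .

lemma K'_fin_dim: "fin_dim_subspace K'"
  using fin_dim_cspan_insert[OF K(1)] .

lemma K_subset_K': "K \<subseteq> K'"
  by (meson cspan_base subset_iff subset_insertI)

lemma y_in_K': "y \<in> K'"
  by (simp add: cspan_base)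

lemma K'_subset_D: "K' \<subseteq> D"
  using K(2) y(1) cspan_minimal[OF _ clinear_on_csubspace[OF T]] by blast

lemma proj_K': "proj K' z = proj K z + cinner z y *\<^sub>C y"
  using proj_insert_orth(2)[OF K_csubspace K_has_proj y(3,2)] .

lemma K'_decomp: "h \<in> K' \<Longrightarrow> h = proj K h + cinner h y *\<^sub>C y"
  by (metis proj_id[OF cspan_csubspace] proj_K')

lemma proj_K'_T_K: "k \<in> K \<Longrightarrow> proj K' (T k) = proj K (T k)"
  using proj_K' T_K_orth_y by simp

lemma T_K'_decomp:
  assumes "h \<in> K'"
  shows "T h = T (proj K h) + cinner h y *\<^sub>C T y"
proof -
  have "proj K h \<in> D"
    using proj_mem[OF K_has_proj K_csubspace] K(2) by blast
  have "T h = T (proj K h + cinner h y *\<^sub>C y)"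
    using K'_decomp[OF assms] by (rule arg_cong)
  also have "\<dots> = T (proj K h) + cinner h y *\<^sub>C T y"
    using clinear_on_add[OF T \<open>proj K h \<in> D\<close>] clinear_on_scale[OF T y(1)]
      csubspace_scale[OF clinear_on_csubspace[OF T] y(1)] by simp
  finally show ?thesis .
qed

lemma cinner_T_y: "h \<in> K' \<Longrightarrow> cinner (T h) y = cinner h y * cinner (T y) y"
  using T_K'_decomp T_K_orth_y proj_mem[OF K_has_proj K_csubspace]
  by (simp add: cinner_add_left cinner_scaleC_left)

lemma cinner_compr_residual_y:
  assumes "h \<in> K'"
  shows "cinner (proj K' (T h) - l *\<^sub>C h) y = cinner h y * (cinner (T y) y - l)"
proof -
  have "cinner (proj K' (T h)) y = cinner (T h) y"
    using proj_K' cnorm_one_cinner[OF y(2)] cinner_orth_right[OF y(3) proj_mem[OF K_has_proj K_csubspace]]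
    by (simp add: cinner_add_left cinner_scaleC_left)
  then show ?thesis
    using cinner_T_y[OF assms] by (simp add: cinner_diff_left cinner_scaleC_left algebra_simps)
qed

lemma compr_residual_decomp:
  assumes "h \<in> K'"
  shows "proj K' (T h) - l *\<^sub>C h =
    (proj K (T (proj K h)) - l *\<^sub>C proj K h + cinner h y *\<^sub>C proj K (T y))
      + (cinner h y * (cinner (T y) y - l)) *\<^sub>C y"
proof -
  have "proj K' (T h) = proj K (T h) + cinner (T h) y *\<^sub>C y"
    by (rule proj_K')
  also have "proj K (T h) = proj K (T (proj K h)) + cinner h y *\<^sub>C proj K (T y)"
    using T_K'_decomp[OF assms] proj_add[OF K_csubspace K_has_proj] proj_scale[OF K_csubspace K_has_proj]
    by simp
  finally have "proj K' (T h) = proj K (T (proj K h)) + cinner h y *\<^sub>C proj K (T y)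
      + (cinner h y * cinner (T y) y) *\<^sub>C y"
    using cinner_T_y[OF assms] by simp
  moreover have "l *\<^sub>C h = l *\<^sub>C (proj K h + cinner h y *\<^sub>C y)"
    using K'_decomp[OF assms] by (rule arg_cong)
  ultimately show ?thesis
    by (simp add: algebra_simps cvs.scale_right_distrib cvs.scale_left_diff_distrib)
qed

lemma new_eigenvalue: "cinner (T y) y \<in> compr_eigenvalues K' T"
proof (rule ccontr)
  let ?\<mu> = "cinner (T y) y"
  assume "?\<mu> \<notin> compr_eigenvalues K' T"
  then have "?\<mu> \<in> resolvent_set K' K' (compr K' T)"
    using compr_spectrum_eq_eigenvalues[OF T K'_fin_dim K'_subset_D]
    unfolding compr_spectrum_def op_spectrum_def by blast
  then have "bij_betw (\<lambda>x. compr K' T x - ?\<mu> *\<^sub>C x) K' K'"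
    unfolding resolvent_set_def mem_Collect_eq by (rule conjunct1)
  then have "y \<in> (\<lambda>x. compr K' T x - ?\<mu> *\<^sub>C x) ` K'"
    using y_in_K' by (simp add: bij_betw_def)
  then obtain h where h: "h \<in> K'" "y = compr K' T h - ?\<mu> *\<^sub>C h"
    by blast
  have "cinner (compr K' T h - ?\<mu> *\<^sub>C h) y = 0"
    using cinner_compr_residual_y[OF h(1), of ?\<mu>] unfolding compr_def by simp
  then have "cinner y y = 0"
    by (simp only: h(2)[symmetric])
  then show False
    using cnorm_one_cinner[OF y(2)] by simp
qed

lemma compr_eigenvalues_step: "compr_eigenvalues K' T = compr_eigenvalues K T \<union> {cinner (T y) y}"
proof (intro equalityI subsetI)
  fix l assume "l \<in> compr_eigenvalues K T \<union> {cinner (T y) y}"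
  then show "l \<in> compr_eigenvalues K' T"
    using new_eigenvalue proj_K'_T_K K_subset_K' unfolding compr_eigenvalues_def by fastforce
next
  fix l assume "l \<in> compr_eigenvalues K' T"
  then obtain h where h: "h \<in> K'" "h \<noteq> 0" "proj K' (T h) = l *\<^sub>C h"
    unfolding compr_eigenvalues_def by blast
  show "l \<in> compr_eigenvalues K T \<union> {cinner (T y) y}"
  proof (cases "l = cinner (T y) y")
    case False
    then have "cinner h y = 0"
      using cinner_compr_residual_y[OF h(1), of l] h(3) by simp
    then have "h = proj K h"
      using K'_decomp[OF h(1)] by (metis add_0_right scaleC_zero_left)
    then have "h \<in> K"
      by (metis proj_mem[OF K_has_proj K_csubspace])
    then show ?thesis
      using proj_K'_T_K h(2,3) unfolding compr_eigenvalues_def by auto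
  qed simp
qed

end

text \<open>With \<open>diag\<close> also \<open>T y \<perp> K\<close>, so the compression is even block diagonal.\<close>

inductive triangular_extension :: "('a::complex_inner \<Rightarrow> 'a) \<Rightarrow> 'a set \<Rightarrow> bool \<Rightarrow> 'a set \<Rightarrow> 'a list \<Rightarrow> bool"
  for T D diag V where
  Nil: "triangular_extension T D diag V []"
| snoc: "triangular_extension T D diag V xs \<Longrightarrow> y \<in> D \<Longrightarrow> cnorm y = 1 \<Longrightarrow>
    (\<forall>k\<in>cspan (V \<union> set xs). cinner y k = 0 \<and> cinner (T k) y = 0 \<and> (diag \<longrightarrow> cinner (T y) k = 0)) \<Longrightarrow>
    triangular_extension T D diag V (xs @ [y])"

lemma cspan_snoc: "cspan (V \<union> set (xs @ [y])) = cspan (insert y (cspan (V \<union> set xs)))"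
  by (simp add: cspan_insert_cspan)

lemma cspan_fin_dim_subspace: "fin_dim_subspace V \<Longrightarrow> cspan V = V"
  using cspan_of_subspace fin_dim_csubspace by blast

context
  fixes T :: "'a::complex_inner \<Rightarrow> 'a" and D V
  assumes T: "clinear_on D T" and V: "fin_dim_subspace V" "V \<subseteq> D"
begin

lemma triangular_extension_span:
  assumes "triangular_extension T D diag V xs"
  shows "fin_dim_subspace (cspan (V \<union> set xs)) \<and> cspan (V \<union> set xs) \<subseteq> D"
  using assms
proof (induction rule: triangular_extension.induct)
  case Nil
  then show ?case
    using V cspan_fin_dim_subspace[OF V(1)] by simp
next
  case (snoc xs y)
  have "set xs \<subseteq> cspan (V \<union> set xs)"
    by (auto intro: cspan_base)
  then have "V \<union> set (xs @ [y]) \<subseteq> D"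
    using V(2) snoc.hyps(2) snoc.IH by auto
  then have "cspan (V \<union> set (xs @ [y])) \<subseteq> D"
    using cspan_minimal clinear_on_csubspace[OF T] by blast
  moreover have "fin_dim_subspace (cspan (V \<union> set (xs @ [y])))"
    unfolding cspan_snoc using fin_dim_cspan_insert snoc.IH by blast
  ultimately show ?case
    by blast
qed

lemma orth_step_snoc:
  assumes "triangular_extension T D diag V (xs @ [y])"
  shows "orth_step T D (cspan (V \<union> set xs)) y"
  using assms triangular_extension_span
  by (cases rule: triangular_extension.cases) (auto simp: orth_step_def orth_def T)

lemma compr_eigenvalues_triangular_extension:
  assumes "triangular_extension T D diag V xs"
  shows "compr_eigenvalues (cspan (V \<union> set xs)) T = compr_eigenvalues V T \<union> (\<lambda>x. cinner (T x) x) ` set xs"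
  using assms
proof (induction rule: triangular_extension.induct)
  case Nil
  then show ?case
    using cspan_fin_dim_subspace[OF V(1)] by simp
next
  case (snoc xs y)
  interpret orth_step T D "cspan (V \<union> set xs)" y
    using orth_step_snoc triangular_extension.snoc[OF snoc.hyps] by blast
  show ?case
    unfolding cspan_snoc compr_eigenvalues_step snoc.IH by auto
qed

lemma proj_T_triangular_extension:
  assumes "triangular_extension T D diag V xs" "v \<in> V"
  shows "proj (cspan (V \<union> set xs)) (T v) = proj V (T v)"
  using assms
proof (induction rule: triangular_extension.induct)
  case Nil
  then show ?case
    using cspan_fin_dim_subspace[OF V(1)] by simp
next
  case (snoc xs y)
  interpret orth_step T D "cspan (V \<union> set xs)" y
    using orth_step_snoc triangular_extension.snoc[OF snoc.hyps] by blast
  have "v \<in> cspan (V \<union> set xs)"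
    using snoc.prems by (auto intro: cspan_base)
  then show ?case
    unfolding cspan_snoc using proj_K'_T_K snoc.IH snoc.prems by simp
qed

end

section \<open>Lower bounds for shifted compressions\<close>

lemma lower_bound_orth_sum:
  assumes ky: "cinner k y = 0" and uy: "cinner u y = 0" and y: "cnorm y = 1"
    and \<delta>: "0 \<le> \<delta>" and ku: "\<delta> * cnorm k \<le> cnorm u" and m: "\<delta> \<le> cmod m"
  shows "\<delta> * cnorm (k + c *\<^sub>C y) \<le> cnorm (u + (c * m) *\<^sub>C y)"
proof -
  have "(\<delta> * cnorm (k + c *\<^sub>C y))^2 = (\<delta> * cnorm k)^2 + (\<delta> * cmod c)^2"
    using pythagoras[of k "c *\<^sub>C y"] ky y by (simp add: cinner_scaleC_right cnorm_scaleC algebra_simps)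
  also have "\<dots> \<le> (cnorm u)^2 + (cmod c * cmod m)^2"
  proof -
    have "\<delta> * cmod c \<le> cmod c * cmod m"
      using mult_right_mono[OF m norm_ge_zero[of c]] by (simp add: mult.commute)
    then show ?thesis
      using ku \<delta> cnorm_nonneg[of k] by (intro add_mono power_mono) auto
  qed
  also have "\<dots> = (cnorm (u + (c * m) *\<^sub>C y))^2"
    using pythagoras[of u "(c * m) *\<^sub>C y"] uy y by (simp add: cinner_scaleC_right cnorm_scaleC norm_mult)
  finally show ?thesis
    using cnorm_nonneg by (meson power2_le_imp_le)
qed

context orth_step
begin

lemma orth_lower_bound_step:
  assumes diag: "\<forall>k\<in>K. cinner (T y) k = 0" and VK: "V \<subseteq> K" and \<delta>: "\<delta> \<ge> 0"
    and far: "\<delta> \<le> cmod (cinner (T y) y - l0)"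
    and IH: "\<forall>h\<in>K. h \<in> orth V \<longrightarrow> proj K (T h) - l0 *\<^sub>C h \<in> orth V \<and>
      \<delta> * cnorm h \<le> cnorm (proj K (T h) - l0 *\<^sub>C h)"
  shows "\<forall>h\<in>K'. h \<in> orth V \<longrightarrow> proj K' (T h) - l0 *\<^sub>C h \<in> orth V \<and>
      \<delta> * cnorm h \<le> cnorm (proj K' (T h) - l0 *\<^sub>C h)"
proof (intro ballI impI)
  fix h assume h: "h \<in> K'" and h_orth: "h \<in> orth V"
  have Ty_orth_K: "proj K (T y) = 0"
    using proj_unique[OF K_csubspace csubspace_0[OF K_csubspace]] diag by simp
  have y_orth_V: "y \<in> orth V"
    using y(3) VK unfolding orth_def by blast
  define k where "k = proj K h"
  define u where "u = proj K (T k) - l0 *\<^sub>C k"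
  have kK: "k \<in> K" and uK: "u \<in> K"
    unfolding k_def u_def using proj_mem[OF K_has_proj K_csubspace] csubspace_diff[OF K_csubspace]
      csubspace_scale[OF K_csubspace] by blast+
  have residual: "proj K' (T h) - l0 *\<^sub>C h = u + (cinner h y * (cinner (T y) y - l0)) *\<^sub>C y"
    using compr_residual_decomp[OF h, of l0] Ty_orth_K unfolding u_def k_def by simp
  have hk: "h = k + cinner h y *\<^sub>C y"
    unfolding k_def by (rule K'_decomp[OF h])
  have "k \<in> orth V"
    using hk h_orth y_orth_V csubspace_diff[OF csubspace_orth] csubspace_scale[OF csubspace_orth]
    by (metis add_diff_cancel_right')
  then have u: "u \<in> orth V" "\<delta> * cnorm k \<le> cnorm u"
    using IH kK unfolding u_def by auto
  show "proj K' (T h) - l0 *\<^sub>C h \<in> orth V \<and> \<delta> * cnorm h \<le> cnorm (proj K' (T h) - l0 *\<^sub>C h)"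
  proof
    show "proj K' (T h) - l0 *\<^sub>C h \<in> orth V"
      unfolding residual using u(1) y_orth_V csubspace_add[OF csubspace_orth] csubspace_scale[OF csubspace_orth]
      by blast
    have "cnorm h = cnorm (k + cinner h y *\<^sub>C y)"
      using hk by (rule arg_cong)
    then show "\<delta> * cnorm h \<le> cnorm (proj K' (T h) - l0 *\<^sub>C h)"
      unfolding residual using lower_bound_orth_sum[OF cinner_orth_right[OF y(3) kK]
        cinner_orth_right[OF y(3) uK] y(2) \<delta> u(2)] far by simp
  qed
qed

end

context
  fixes T :: "'a::complex_inner \<Rightarrow> 'a" and D V
  assumes T: "clinear_on D T" and V: "fin_dim_subspace V" "V \<subseteq> D"
begin

lemma triangular_extension_orth_lower_bound:
  assumes "triangular_extension T D True V xs" and \<delta>: "\<delta> \<ge> 0"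
    and far: "\<forall>x\<in>set xs. \<delta> \<le> cmod (cinner (T x) x - l0)"
  shows "\<forall>h\<in>cspan (V \<union> set xs). h \<in> orth V \<longrightarrow>
          proj (cspan (V \<union> set xs)) (T h) - l0 *\<^sub>C h \<in> orth V \<and>
          \<delta> * cnorm h \<le> cnorm (proj (cspan (V \<union> set xs)) (T h) - l0 *\<^sub>C h)"
  using assms(1) far
proof (induction rule: triangular_extension.induct)
  case Nil
  show ?case
  proof (intro ballI impI)
    fix h assume "h \<in> cspan (V \<union> set [])" "h \<in> orth V"
    then have "h = 0"
      using mem_orth_self[of h V] cspan_fin_dim_subspace[OF V(1)] by simp
    then show "proj (cspan (V \<union> set [])) (T h) - l0 *\<^sub>C h \<in> orth V \<and>
        \<delta> * cnorm h \<le> cnorm (proj (cspan (V \<union> set [])) (T h) - l0 *\<^sub>C h)"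
      using clinear_on_zero[OF T] proj_id[OF cspan_csubspace[of V] csubspace_0[OF cspan_csubspace[of V]]]
        csubspace_0[OF csubspace_orth] by (simp add: cnorm_nonneg)
  qed
next
  case (snoc xs y)
  interpret orth_step T D "cspan (V \<union> set xs)" y
    using orth_step_snoc[OF T V triangular_extension.snoc[OF snoc.hyps]] .
  have diag: "\<forall>k\<in>cspan (V \<union> set xs). cinner (T y) k = 0"
    using snoc.hyps(4) by blast
  have "V \<subseteq> cspan (V \<union> set xs)"
    by (auto intro: cspan_base)
  then show ?case
    unfolding cspan_snoc
    by (rule orth_lower_bound_step[OF diag _ \<delta>]) (use snoc.prems snoc.IH in auto)
qed

text \<open>The \<open>V\<close>-component \<open>v\<close> of \<open>h\<close> satisfies \<open>(T\<^sub>V - l\<^sub>0) v \<in> V \<inter> V\<^sup>\<perp>\<close>, so \<open>v = 0\<close>.\<close>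

lemma lower_bound_of_orth_lower_bound:
  assumes H: "fin_dim_subspace H" "H \<subseteq> D" "V \<subseteq> H"
    and lV: "l0 \<in> resolvent_set V V (compr V T)"
    and PV: "\<forall>v\<in>V. proj H (T v) = proj V (T v)"
    and orth_bound: "\<forall>h\<in>H. h \<in> orth V \<longrightarrow> proj H (T h) - l0 *\<^sub>C h \<in> orth V \<and>
      \<delta> * cnorm h \<le> cnorm (proj H (T h) - l0 *\<^sub>C h)"
    and h: "h \<in> H" "proj H (T h) - l0 *\<^sub>C h \<in> orth V"
  shows "\<delta> * cnorm h \<le> cnorm (proj H (T h) - l0 *\<^sub>C h)"
proof -
  have Vs: "csubspace V" and Vp: "has_proj V" and Hs: "csubspace H"
    using V(1) H(1) fin_dim_csubspace fin_dim_has_proj by auto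
  define f where "f = (\<lambda>x. proj H (T x) - l0 *\<^sub>C x)"
  have f: "clinear_on H f"
    unfolding f_def using clinear_on_shift compr_clinear_on(1)[OF T H(1,2)] unfolding compr_def by blast
  define v where "v = proj V h"
  have v: "v \<in> V" "v \<in> H" "h - v \<in> H" "h - v \<in> orth V"
    unfolding v_def using proj_mem[OF Vp Vs] H(3) csubspace_diff[OF Hs h(1)] proj_residual_orth[OF Vp Vs]
    by (auto simp: orth_def)
  have "f v \<in> V"
    unfolding f_def using PV v(1) proj_mem[OF Vp Vs] csubspace_diff[OF Vs] csubspace_scale[OF Vs] by simp
  moreover have "f v = f h - f (h - v)"
    using clinear_on_diff[OF f h(1) v(2)] by simp
  then have "f v \<in> orth V"
    using h(2) orth_bound v(3,4) csubspace_diff[OF csubspace_orth] unfolding f_def by metis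
  ultimately have "proj V (T v) - l0 *\<^sub>C v = 0"
    using mem_orth_self PV v(1) unfolding f_def by metis
  then have "v = 0"
    using lV fin_dim_resolvent_set_iff[OF V(1) compr_clinear_on[OF T V]] v(1) unfolding compr_def by blast
  then show ?thesis
    using orth_bound h(1) v(4) by simp
qed

end

lemma lower_bound_outside_numrange:
  assumes T: "clinear_on D T" and l0: "l0 \<notin> closure (numrange D T)"
  obtains \<delta> where "\<delta> > 0"
    "\<And>H h. H \<subseteq> D \<Longrightarrow> csubspace H \<Longrightarrow> has_proj H \<Longrightarrow> h \<in> H \<Longrightarrow>
      \<delta> * cnorm h \<le> cnorm (proj H (T h) - l0 *\<^sub>C h)"
proof -
  obtain \<delta> where \<delta>: "\<delta> > 0" "\<And>\<mu>. \<mu> \<in> numrange D T \<Longrightarrow> \<delta> \<le> cmod (\<mu> - l0)"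
    using l0 closure_approachable[of l0 "numrange D T"] by (metis dist_norm not_le)
  have "\<delta> * cnorm h \<le> cnorm (proj H (T h) - l0 *\<^sub>C h)"
    if H: "H \<subseteq> D" "csubspace H" "has_proj H" and h: "h \<in> H" for H h
  proof (cases "h = 0")
    case False
    define \<mu> where "\<mu> = cinner (T h) h / cinner h h"
    have "\<mu> \<in> numrange D T"
      unfolding \<mu>_def using rayleigh_quotient_in_numrange[OF T _ False] h H(1) by blast
    then have "\<delta> \<le> cmod (\<mu> - l0)"
      by (rule \<delta>(2))
    have "cinner (proj H (T h)) h = cinner (T h) h"
      using proj_residual_orth[OF H(3,2) h, of "T h"] by (simp add: cinner_diff_left)
    then have "cinner (proj H (T h) - l0 *\<^sub>C h) h = complex_of_real ((cnorm h)^2) * (\<mu> - l0)"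
      using cinner_eq_zero_iff[of h] False unfolding \<mu>_def cnorm_sq_complex
      by (simp add: cinner_diff_left cinner_scaleC_left field_simps)
    then have "(cnorm h)^2 * cmod (\<mu> - l0) \<le> cnorm (proj H (T h) - l0 *\<^sub>C h) * cnorm h"
      using cauchy_schwarz[of "proj H (T h) - l0 *\<^sub>C h" h] by (simp add: norm_mult norm_power)
    then have "(cnorm h)^2 * \<delta> \<le> cnorm (proj H (T h) - l0 *\<^sub>C h) * cnorm h"
      using \<open>\<delta> \<le> cmod (\<mu> - l0)\<close> by (meson mult_left_mono order_trans zero_le_power2)
    then show ?thesis
      using cnorm_pos[OF False] by (simp add: power2_eq_square mult.commute mult.left_commute)
  qed (simp add: cnorm_nonneg)
  then show ?thesis
    using that \<delta>(1) by blast
qed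

definition adjoint_vec :: "'a::complex_inner set \<Rightarrow> ('a \<Rightarrow> 'a) \<Rightarrow> 'a \<Rightarrow> 'a" where
  "adjoint_vec D T y = (SOME z. \<forall>x\<in>D. cinner (T x) y = cinner x z)"

lemma cinner_adjoint_vec: "y \<in> adj_dom D T \<Longrightarrow> x \<in> D \<Longrightarrow> cinner (T x) y = cinner x (adjoint_vec D T y)"
  unfolding adj_dom_def adjoint_vec_def
  by (rule someI_ex[where P = "\<lambda>z. \<forall>x\<in>D. cinner (T x) y = cinner x z", rule_format]) auto

context
  fixes T :: "'a::complex_inner \<Rightarrow> 'a" and D V
  assumes T: "clinear_on D T" and V: "fin_dim_subspace V" "V \<subseteq> D"
begin

text \<open>If \<open>B\<close> spans the current space, any unit vector orthogonal to \<open>B\<close>, \<open>T B\<close> and \<open>T\<^sup>* B\<close> is an admissible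
  next vector; the numerical range of \<open>T\<close> on the orthogonal complement of the finite-dimensional
  span of these vectors supplies it.\<close>

lemma triangular_extension_snoc_exists:
  assumes xs: "triangular_extension T D diag V xs" and adj: "diag \<longrightarrow> D \<subseteq> adj_dom D T"
    and avail: "\<And>U. fin_dim_subspace U \<Longrightarrow> \<exists>x. x \<in> orth U \<inter> D \<and> cnorm x = 1 \<and> P (cinner (T x) x)"
  obtains x where "triangular_extension T D diag V (xs @ [x])" "P (cinner (T x) x)"
proof -
  obtain BV where BV: "finite BV" "V = cspan BV"
    using V(1) by (rule fin_dimE)
  define B where "B = BV \<union> set xs"
  have K_eq: "cspan (V \<union> set xs) = cspan B"
    unfolding B_def BV(2) by (rule cspan_Un_cspan)
  have BD: "B \<subseteq> D"
    using triangular_extension_span[OF T V xs] cspan_base unfolding K_eq by blast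
  define U where "U = cspan (B \<union> T ` B \<union> adjoint_vec D T ` B)"
  have "fin_dim_subspace U"
    unfolding U_def B_def using BV(1) by (intro fin_dim_cspan) simp
  then obtain x where x: "x \<in> orth U" "x \<in> D" "cnorm x = 1" "P (cinner (T x) x)"
    using avail by blast
  have x_orth: "cinner x u = 0" if "u \<in> B \<union> T ` B \<union> adjoint_vec D T ` B" for u
    using x(1) cspan_base[OF that] unfolding U_def orth_def by blast
  have "cinner x b = 0" if "b \<in> B" for b
    using x_orth that by blast
  then have orth_x: "\<forall>k\<in>cspan B. cinner x k = 0"
    using cinner_cspan_zero[of B] by blast
  have "cinner (T b) x = 0" if "b \<in> B" for b
    using x_orth[of "T b"] that cinner_eq_zero_sym by blast
  then have orth_Tx: "\<forall>k\<in>cspan B. cinner (T k) x = 0"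
    using cinner_image_cspan_zero[OF T BD] by blast
  have orth_T'x: "\<forall>k\<in>cspan B. cinner (T x) k = 0" if diag
  proof -
    have "cinner (T x) b = 0" if "b \<in> B" for b
    proof -
      have "b \<in> adj_dom D T"
        using adj \<open>diag\<close> BD that by blast
      then have "cinner (T x) b = cinner x (adjoint_vec D T b)"
        using cinner_adjoint_vec x(2) by blast
      also have "\<dots> = 0"
        using x_orth that by blast
      finally show ?thesis .
    qed
    then show ?thesis
      using cinner_cspan_zero[of B] by blast
  qed
  have "triangular_extension T D diag V (xs @ [x])"
    using triangular_extension.snoc[OF xs x(2,3)] orth_x orth_Tx orth_T'x unfolding K_eq by blast
  then show ?thesis
    using that x(4) by blast
qed

lemma triangular_extension_exists:
  assumes adj: "diag \<longrightarrow> D \<subseteq> adj_dom D T"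
    and avail: "\<forall>\<omega>\<in>set ws. \<forall>U. fin_dim_subspace U \<longrightarrow>
      (\<exists>x. x \<in> orth U \<inter> D \<and> cnorm x = 1 \<and> Q \<omega> (cinner (T x) x))"
  shows "\<exists>xs. triangular_extension T D diag V xs \<and> list_all2 (\<lambda>\<omega> x. Q \<omega> (cinner (T x) x)) ws xs"
  using avail
proof (induction ws rule: rev_induct)
  case Nil
  show ?case
    using triangular_extension.Nil by blast
next
  case (snoc \<omega> ws)
  then obtain xs where xs: "triangular_extension T D diag V xs"
    "list_all2 (\<lambda>\<omega> x. Q \<omega> (cinner (T x) x)) ws xs"
    by auto
  obtain x where "triangular_extension T D diag V (xs @ [x])" "Q \<omega> (cinner (T x) x)"
    using triangular_extension_snoc_exists[OF xs(1) adj, of "Q \<omega>"] snoc.prems by auto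
  then show ?case
    using xs(2) list_all2_appendI[of _ ws xs "[\<omega>]" "[x]"] by auto
qed

lemma triangular_extension_hitting:
  assumes adj: "diag \<longrightarrow> D \<subseteq> adj_dom D T" and \<Omega>: "finite \<Omega>" "\<Omega> \<subseteq> interior (W_e1 D T)"
  obtains xs where "triangular_extension T D diag V xs" "(\<lambda>x. cinner (T x) x) ` set xs = \<Omega>"
proof -
  obtain ws where ws: "set ws = \<Omega>"
    using finite_list \<Omega>(1) by blast
  have "\<forall>\<omega>\<in>set ws. \<forall>U. fin_dim_subspace U \<longrightarrow> (\<exists>x. x \<in> orth U \<inter> D \<and> cnorm x = 1 \<and> cinner (T x) x = \<omega>)"
  proof (intro ballI allI impI)
    fix \<omega> and U :: "'a set" assume "\<omega> \<in> set ws" "fin_dim_subspace U"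
    then have "\<omega> \<in> numrange (orth U \<inter> D) T"
      using interior_W_e1_subset_numrange[OF T] \<Omega>(2) ws by blast
    then show "\<exists>x. x \<in> orth U \<inter> D \<and> cnorm x = 1 \<and> cinner (T x) x = \<omega>"
      unfolding numrange_def by blast
  qed
  then obtain xs where "triangular_extension T D diag V xs"
      "list_all2 (\<lambda>\<omega> x. cinner (T x) x = \<omega>) ws xs"
    using triangular_extension_exists[OF adj, where Q = "\<lambda>\<omega> \<mu>. \<mu> = \<omega>"] by blast
  moreover from this(2) have "ws = map (\<lambda>x. cinner (T x) x) xs"
    by (induction rule: list_all2_induct) auto
  ultimately show ?thesis
    using that ws by auto
qed

lemma triangular_extension_approximating:
  assumes adj: "diag \<longrightarrow> D \<subseteq> adj_dom D T" and \<Omega>: "compact \<Omega>" "\<Omega> \<subseteq> W_e1 D T" and r: "r > 0"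
  obtains xs where "triangular_extension T D diag V xs"
    "\<forall>x\<in>set xs. \<exists>\<omega>\<in>\<Omega>. dist (cinner (T x) x) \<omega> < r"
    "\<forall>l\<in>\<Omega>. \<exists>x\<in>set xs. dist (cinner (T x) x) l < 2 * r"
proof -
  obtain F where F: "F \<subseteq> \<Omega>" "finite F" "\<Omega> \<subseteq> (\<Union>c\<in>F. ball c r)"
    using compactE_image[OF \<Omega>(1), of \<Omega> "\<lambda>c. ball c r"] r by force
  obtain ws where ws: "set ws = F"
    using finite_list F(2) by blast
  have "\<forall>\<omega>\<in>set ws. \<forall>U. fin_dim_subspace U \<longrightarrow>
      (\<exists>x. x \<in> orth U \<inter> D \<and> cnorm x = 1 \<and> dist (cinner (T x) x) \<omega> < r)"
  proof (intro ballI allI impI)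
    fix \<omega> and U :: "'a set" assume "\<omega> \<in> set ws" "fin_dim_subspace U"
    then show "\<exists>x. x \<in> orth U \<inter> D \<and> cnorm x = 1 \<and> dist (cinner (T x) x) \<omega> < r"
      using W_e1_approx[OF _ _ r, of U \<omega> D T] \<Omega>(2) F(1) ws by blast
  qed
  then obtain xs where xs: "triangular_extension T D diag V xs"
      "list_all2 (\<lambda>\<omega> x. dist (cinner (T x) x) \<omega> < r) ws xs"
    using triangular_extension_exists[OF adj, where Q = "\<lambda>\<omega> \<mu>. dist \<mu> \<omega> < r"] by blast
  have "\<forall>x\<in>set xs. \<exists>\<omega>\<in>F. dist (cinner (T x) x) \<omega> < r"
    using xs(2) unfolding ws[symmetric] by (induction rule: list_all2_induct) auto
  moreover have "\<forall>c\<in>F. \<exists>x\<in>set xs. dist (cinner (T x) x) c < r"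
    using xs(2) unfolding ws[symmetric] by (induction rule: list_all2_induct) auto
  then have "\<forall>l\<in>\<Omega>. \<exists>x\<in>set xs. dist (cinner (T x) x) l < 2 * r"
    using F(3) dist_triangle_less_add by (fastforce simp: dist_commute)
  ultimately show ?thesis
    using that xs(1) F(1) by blast
qed

end

section \<open>Resolvent estimates\<close>

lemma resolvent_apply:
  assumes "l \<in> resolvent_set K D A" "y \<in> K"
  shows "resolvent D A l y \<in> D" and "A (resolvent D A l y) - l *\<^sub>C resolvent D A l y = y"
  using assms unfolding resolvent_set_def resolvent_def bij_betw_def
  by (auto intro: inv_into_into f_inv_into_f[where f = "\<lambda>x. A x - l *\<^sub>C x"])

context
  fixes T :: "'a::complex_inner \<Rightarrow> 'a" and D H V l0 \<delta>
  assumes T: "clinear_on D T" and H: "fin_dim_subspace H" "H \<subseteq> D"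
    and V: "fin_dim_subspace V" "V \<subseteq> H"
    and lV: "l0 \<in> resolvent_set V V (compr V T)"
    and PV: "\<forall>v\<in>V. proj H (T v) = proj V (T v)"
    and \<delta>: "\<delta> > 0"
    and lower_bound: "\<forall>h\<in>H. proj H (T h) - l0 *\<^sub>C h \<in> orth V \<longrightarrow>
      \<delta> * cnorm h \<le> cnorm (proj H (T h) - l0 *\<^sub>C h)"
begin

lemma resolvent_set_compr_extension: "l0 \<in> resolvent_set H H (compr H T)"
  unfolding fin_dim_resolvent_set_iff[OF H(1) compr_clinear_on[OF T H]]
proof (intro ballI impI)
  fix h assume h: "h \<in> H" "compr H T h - l0 *\<^sub>C h = 0"
  then have "\<delta> * cnorm h \<le> 0"
    using lower_bound csubspace_0[OF csubspace_orth] unfolding compr_def by force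
  then show "h = 0"
    using \<delta> cnorm_nonneg[of h] cnorm_eq_zero[of h] by (simp add: mult_le_0_iff)
qed

text \<open>The difference of the two resolvents is mapped by \<open>P\<^sub>H T - l\<^sub>0\<close> to \<open>P\<^sub>H x - P\<^sub>V x \<in> V\<^sup>\<perp>\<close>.\<close>

lemma resolvent_compr_extension_estimate:
  "\<delta> * cnorm (resolvent H (compr H T) l0 (proj H x) - resolvent V (compr V T) l0 (proj V x))
    \<le> cnorm (x - proj V x)"
proof -
  have Hs: "csubspace H" and Hp: "has_proj H" and Vs: "csubspace V" and Vp: "has_proj V"
    using H(1) V(1) fin_dim_csubspace fin_dim_has_proj by auto
  define f where "f = (\<lambda>x. compr H T x - l0 *\<^sub>C x)"
  have f: "clinear_on H f"
    unfolding f_def using clinear_on_shift compr_clinear_on(1)[OF T H] by blast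
  define u where "u = resolvent V (compr V T) l0 (proj V x)"
  define r where "r = resolvent H (compr H T) l0 (proj H x)"
  have u: "u \<in> H" "f u = proj V x"
    using resolvent_apply[OF lV proj_mem[OF Vp Vs]] PV V(2) unfolding u_def f_def compr_def by auto
  have r: "r \<in> H" "f r = proj H x"
    using resolvent_apply[OF resolvent_set_compr_extension proj_mem[OF Hp Hs]]
    unfolding r_def f_def by auto
  have "proj V x \<in> H"
    using proj_mem[OF Vp Vs] V(2) by blast
  then have PH_residual: "proj H (x - proj V x) = proj H x - proj V x"
    using proj_diff[OF Hs Hp, of x "proj V x"] proj_id[OF Hs] by simp
  have "f (r - u) = proj H x - proj V x"
    using clinear_on_diff[OF f r(1) u(1)] r(2) u(2) by simp
  moreover have "proj H x - proj V x \<in> orth V"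
  proof -
    have "cinner (proj H x - proj V x) v = cinner (x - proj V x) v - cinner (x - proj H x) v" for v
      by (simp add: cinner_diff_left)
    then show ?thesis
      unfolding orth_def using proj_residual_orth[OF Hp Hs] proj_residual_orth[OF Vp Vs] V(2) by auto
  qed
  ultimately have "\<delta> * cnorm (r - u) \<le> cnorm (proj H (x - proj V x))"
    using lower_bound[rule_format, OF csubspace_diff[OF Hs r(1) u(1)]] unfolding PH_residual f_def compr_def
    by simp
  also have "\<dots> \<le> cnorm (x - proj V x)"
    using cnorm_proj_le[OF Hs Hp] .
  finally show ?thesis
    unfolding r_def u_def .
qed

end

lemma compr_gsr_with_extension:
  assumes gsr: "compr_gsr_with V D T n0 l0" and V_conv: "proj_strong_to_id V"
    and T: "clinear_on D T" and V: "\<And>n. fin_dim_subspace (V n)"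
    and H: "\<And>n. fin_dim_subspace (H n)" "\<And>n. H n \<subseteq> D" "\<And>n. V n \<subseteq> H n"
    and PV: "\<And>n. n \<ge> n0 \<Longrightarrow> \<forall>v\<in>V n. proj (H n) (T v) = proj (V n) (T v)"
    and \<delta>: "\<delta> > 0"
    and lower_bound: "\<And>n. n \<ge> n0 \<Longrightarrow> \<forall>h\<in>H n. proj (H n) (T h) - l0 *\<^sub>C h \<in> orth (V n) \<longrightarrow>
      \<delta> * cnorm h \<le> cnorm (proj (H n) (T h) - l0 *\<^sub>C h)"
  shows "compr_gsr_with H D T n0 l0"
proof -
  have lV: "\<And>n. n \<ge> n0 \<Longrightarrow> l0 \<in> resolvent_set (V n) (V n) (compr (V n) T)"
    and lT: "l0 \<in> resolvent_set UNIV D T"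
    and conv: "\<And>x. (\<lambda>n. cnorm (resolvent (V n) (compr (V n) T) l0 (proj (V n) x) - resolvent D T l0 x))
      \<longlonglongrightarrow> 0"
    using gsr unfolding compr_gsr_with_def gsr_with_def by auto
  note est = resolvent_compr_extension_estimate[OF T H(1,2) V H(3) lV PV \<delta> lower_bound]
  show ?thesis
    unfolding compr_gsr_with_def gsr_with_def
  proof (intro conjI allI impI)
    show "l0 \<in> resolvent_set (H n) (H n) (compr (H n) T)" if "n0 \<le> n" for n
      using resolvent_set_compr_extension[OF T H(1,2) V H(3) lV PV \<delta> lower_bound] that by blast
    show "l0 \<in> resolvent_set UNIV D T"
      by (rule lT)
  next
    fix x
    let ?a = "\<lambda>n. resolvent (H n) (compr (H n) T) l0 (proj (H n) x)"
    let ?b = "\<lambda>n. resolvent (V n) (compr (V n) T) l0 (proj (V n) x)"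
    let ?c = "resolvent D T l0 x"
    have "(\<lambda>n. cnorm (x - proj (V n) x) / \<delta> + cnorm (?b n - ?c)) \<longlonglongrightarrow> 0 / \<delta> + 0"
      using V_conv conv[of x] \<delta> unfolding proj_strong_to_id_def
      by (intro tendsto_intros) (auto simp: cnorm_minus_commute)
    then have bound_lim: "(\<lambda>n. cnorm (x - proj (V n) x) / \<delta> + cnorm (?b n - ?c)) \<longlonglongrightarrow> 0"
      by simp
    have bound: "eventually (\<lambda>n. cnorm (?a n - ?c) \<le> cnorm (x - proj (V n) x) / \<delta> + cnorm (?b n - ?c))
        sequentially"
    proof (rule eventually_sequentiallyI[of n0])
      fix n assume "n0 \<le> n"
      have "cnorm (?a n - ?c) \<le> cnorm (?a n - ?b n) + cnorm (?b n - ?c)"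
        using cnorm_triangle[of "?a n - ?b n" "?b n - ?c"] by simp
      moreover have "cnorm (?a n - ?b n) \<le> cnorm (x - proj (V n) x) / \<delta>"
        using est[of n x] \<open>n0 \<le> n\<close> \<delta> by (simp add: field_simps mult.commute)
      ultimately show "cnorm (?a n - ?c) \<le> cnorm (x - proj (V n) x) / \<delta> + cnorm (?b n - ?c)"
        by linarith
    qed
    have "eventually (\<lambda>n. 0 \<le> cnorm (?a n - ?c)) sequentially"
      by (simp add: cnorm_nonneg)
    then show "(\<lambda>n. cnorm (?a n - ?c)) \<longlonglongrightarrow> 0"
      using tendsto_sandwich[OF _ bound tendsto_const bound_lim] by blast
  qed
qed

definition spectral_extension ::
  "'a::complex_inner set \<Rightarrow> ('a \<Rightarrow> 'a) \<Rightarrow> (nat \<Rightarrow> 'a set) \<Rightarrow> complex set \<Rightarrow> (nat \<Rightarrow> 'a set) \<Rightarrow> bool" where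
  "spectral_extension D T V \<Omega> Hs \<longleftrightarrow>
     (\<forall>n. fin_dim_subspace (Hs n) \<and> Hs n \<subseteq> D \<and> V n \<subseteq> Hs n) \<and>
     proj_strong_to_id Hs \<and>
     (\<forall>e>0. \<exists>N. \<forall>n\<ge>N. \<forall>l\<in>\<Omega>. infdist l (compr_spectrum (Hs n) T) < e) \<and>
     (finite \<Omega> \<and> \<Omega> \<subseteq> interior (W_e1 D T) \<longrightarrow>
        (\<forall>n. compr_spectrum (Hs n) T = compr_spectrum (V n) T \<union> \<Omega>))"

lemma proj_strong_to_id_mono:
  assumes "proj_strong_to_id V" "\<And>n. fin_dim_subspace (V n)" "\<And>n. fin_dim_subspace (H n)"
    "\<And>n. V n \<subseteq> H n"
  shows "proj_strong_to_id H"
  unfolding proj_strong_to_id_def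
proof
  fix x
  have "cnorm (proj (H n) x - x) \<le> cnorm (proj (V n) x - x)" for n
    using cnorm_proj_residual_mono[OF fin_dim_csubspace[OF assms(2)[of n]] fin_dim_has_proj[OF assms(2)[of n]]
        fin_dim_csubspace[OF assms(3)[of n]] fin_dim_has_proj[OF assms(3)[of n]] assms(4)[of n], of x]
    by (simp add: cnorm_minus_commute)
  then have le: "eventually (\<lambda>n. cnorm (proj (H n) x - x) \<le> cnorm (proj (V n) x - x)) sequentially"
    by simp
  have nonneg: "eventually (\<lambda>n. 0 \<le> cnorm (proj (H n) x - x)) sequentially"
    by (simp add: cnorm_nonneg)
  have "(\<lambda>n. cnorm (proj (V n) x - x)) \<longlonglongrightarrow> 0"
    using assms(1) unfolding proj_strong_to_id_def by blast
  then show "(\<lambda>n. cnorm (proj (H n) x - x)) \<longlonglongrightarrow> 0"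
    by (rule tendsto_sandwich[OF nonneg le tendsto_const])
qed

lemma infdist_uniform_tendsto_zero:
  assumes "\<And>n l. l \<in> \<Omega> \<Longrightarrow> \<exists>\<mu>\<in>S n. dist \<mu> l < 2 / real (Suc n)"
  shows "\<forall>e>0. \<exists>N. \<forall>n\<ge>N. \<forall>l\<in>\<Omega>. infdist l (S n) < e"
proof (intro allI impI)
  fix e :: real assume "e > 0"
  obtain N where N: "inverse (real (Suc N)) < e / 2"
    using reals_Archimedean[of "e / 2"] \<open>e > 0\<close> by auto
  have "infdist l (S n) < e" if "N \<le> n" "l \<in> \<Omega>" for n l
  proof -
    obtain \<mu> where \<mu>: "\<mu> \<in> S n" "dist \<mu> l < 2 / real (Suc n)"
      using assms \<open>l \<in> \<Omega>\<close> by blast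
    have "infdist l (S n) \<le> dist l \<mu>"
      using infdist_le[OF \<mu>(1)] .
    also have "\<dots> < 2 / real (Suc n)"
      using \<mu>(2) by (simp add: dist_commute)
    also have "\<dots> \<le> 2 / real (Suc N)"
      using \<open>N \<le> n\<close> by (intro divide_left_mono) auto
    finally show ?thesis
      using N by (simp add: inverse_eq_divide)
  qed
  then show "\<exists>N. \<forall>n\<ge>N. \<forall>l\<in>\<Omega>. infdist l (S n) < e"
    by blast
qed

context
  fixes T :: "'a::complex_inner \<Rightarrow> 'a" and D and V :: "nat \<Rightarrow> 'a set" and \<Omega> :: "complex set"
  assumes T: "clinear_on D T" and V: "\<And>n. fin_dim_subspace (V n)" "\<And>n. V n \<subseteq> D"
    and V_conv: "proj_strong_to_id V" and \<Omega>: "compact \<Omega>" "\<Omega> \<subseteq> W_e1 D T"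
begin

lemma triangular_extension_ritz_values:
  assumes adj: "diag \<longrightarrow> D \<subseteq> adj_dom D T" and r: "r > 0"
  obtains xs where "triangular_extension T D diag (V n) xs"
    "\<forall>x\<in>set xs. \<exists>\<omega>\<in>\<Omega>. dist (cinner (T x) x) \<omega> < r"
    "\<forall>l\<in>\<Omega>. \<exists>x\<in>set xs. dist (cinner (T x) x) l < 2 * r"
    "finite \<Omega> \<and> \<Omega> \<subseteq> interior (W_e1 D T) \<longrightarrow> (\<lambda>x. cinner (T x) x) ` set xs = \<Omega>"
proof (cases "finite \<Omega> \<and> \<Omega> \<subseteq> interior (W_e1 D T)")
  case True
  then obtain xs where "triangular_extension T D diag (V n) xs" "(\<lambda>x. cinner (T x) x) ` set xs = \<Omega>"
    using triangular_extension_hitting[OF T V(1) V(2) adj] by blast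
  then show ?thesis
    using that r by force
next
  case False
  then show ?thesis
    using triangular_extension_approximating[OF T V(1) V(2) adj \<Omega> r] that by blast
qed

lemma spectral_extension_triangular:
  assumes adj: "diag \<longrightarrow> D \<subseteq> adj_dom D T" and \<rho>: "\<rho> > 0"
  obtains xs where "\<And>n. triangular_extension T D diag (V n) (xs n)"
    "\<And>n x. x \<in> set (xs n) \<Longrightarrow> \<exists>\<omega>\<in>\<Omega>. dist (cinner (T x) x) \<omega> < \<rho>"
    "spectral_extension D T V \<Omega> (\<lambda>n. cspan (V n \<union> set (xs n)))"
proof -
  define r where "r = (\<lambda>n::nat. min (1 / real (Suc n)) \<rho>)"
  have r: "r n > 0" "r n \<le> \<rho>" "r n \<le> 1 / real (Suc n)" for n
    using \<rho> unfolding r_def by auto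
  define admissible where "admissible n xs \<longleftrightarrow> triangular_extension T D diag (V n) xs \<and>
      (\<forall>x\<in>set xs. \<exists>\<omega>\<in>\<Omega>. dist (cinner (T x) x) \<omega> < r n) \<and>
      (\<forall>l\<in>\<Omega>. \<exists>x\<in>set xs. dist (cinner (T x) x) l < 2 * r n) \<and>
      (finite \<Omega> \<and> \<Omega> \<subseteq> interior (W_e1 D T) \<longrightarrow> (\<lambda>x. cinner (T x) x) ` set xs = \<Omega>)" for n xs
  have "\<exists>xs. admissible n xs" for n
    unfolding admissible_def
    by (rule triangular_extension_ritz_values[OF adj r(1), of n]) (rule exI, intro conjI, assumption+)
  then obtain xs where "admissible n (xs n)" for n
    using choice[of admissible] by blast
  then have xs: "\<And>n. triangular_extension T D diag (V n) (xs n)"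
      "\<And>n. \<forall>x\<in>set (xs n). \<exists>\<omega>\<in>\<Omega>. dist (cinner (T x) x) \<omega> < r n"
      "\<And>n. \<forall>l\<in>\<Omega>. \<exists>x\<in>set (xs n). dist (cinner (T x) x) l < 2 * r n"
      "\<And>n. finite \<Omega> \<and> \<Omega> \<subseteq> interior (W_e1 D T) \<longrightarrow> (\<lambda>x. cinner (T x) x) ` set (xs n) = \<Omega>"
    unfolding admissible_def by auto
  define Hs where "Hs = (\<lambda>n. cspan (V n \<union> set (xs n)))"
  have Hs: "fin_dim_subspace (Hs n)" "Hs n \<subseteq> D" "V n \<subseteq> Hs n" for n
    using triangular_extension_span[OF T V(1) V(2) xs(1)] unfolding Hs_def by (auto intro: cspan_base)
  have spectrum_Hs: "compr_spectrum (Hs n) T = compr_spectrum (V n) T \<union> (\<lambda>x. cinner (T x) x) ` set (xs n)" for n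
    using compr_spectrum_eq_eigenvalues[OF T Hs(1,2)] compr_spectrum_eq_eigenvalues[OF T V(1) V(2)]
      compr_eigenvalues_triangular_extension[OF T V(1) V(2) xs(1)] unfolding Hs_def by simp
  have "\<exists>\<mu>\<in>compr_spectrum (Hs n) T. dist \<mu> l < 2 / real (Suc n)" if l: "l \<in> \<Omega>" for n l
  proof -
    obtain x where x: "x \<in> set (xs n)" "dist (cinner (T x) x) l < 2 * r n"
      using xs(3)[of n, rule_format, OF l] by blast
    have "2 * r n \<le> 2 / real (Suc n)"
      using mult_left_mono[OF r(3)[of n], of 2] by simp
    then have "dist (cinner (T x) x) l < 2 / real (Suc n)"
      using x(2) by linarith
    moreover have "cinner (T x) x \<in> compr_spectrum (Hs n) T"
      unfolding spectrum_Hs using x(1) by blast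
    ultimately show ?thesis
      by blast
  qed
  then have "\<forall>e>0. \<exists>N. \<forall>n\<ge>N. \<forall>l\<in>\<Omega>. infdist l (compr_spectrum (Hs n) T) < e"
    by (rule infdist_uniform_tendsto_zero)
  then have "spectral_extension D T V \<Omega> Hs"
    unfolding spectral_extension_def using Hs spectrum_Hs xs(4) proj_strong_to_id_mono[OF V_conv V(1) Hs(1,3)]
    by auto
  then show ?thesis
    using that[OF xs(1)] xs(2) r(2) unfolding Hs_def by (meson less_le_trans)
qed

lemma spectral_extension_exists: "\<exists>Hs. spectral_extension D T V \<Omega> Hs"
proof -
  obtain xs where "spectral_extension D T V \<Omega> (\<lambda>n. cspan (V n \<union> set (xs n)))"
    by (rule spectral_extension_triangular[of False 1]) auto
  then show ?thesis
    by blast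
qed

lemma spectral_extension_gsr_outside_numrange:
  assumes gsr: "compr_gsr_with V D T n0 l0" and l0: "l0 \<notin> closure (numrange D T)"
  shows "\<exists>Hs. spectral_extension D T V \<Omega> Hs \<and> compr_gsr Hs D T"
proof -
  obtain xs where xs: "\<And>n. triangular_extension T D False (V n) (xs n)"
    and ext: "spectral_extension D T V \<Omega> (\<lambda>n. cspan (V n \<union> set (xs n)))"
    by (rule spectral_extension_triangular[of False 1]) auto
  define Hs where "Hs = (\<lambda>n. cspan (V n \<union> set (xs n)))"
  have Hs: "fin_dim_subspace (Hs n)" "Hs n \<subseteq> D" "V n \<subseteq> Hs n" for n
    using ext unfolding spectral_extension_def Hs_def by auto
  obtain \<delta> where \<delta>: "\<delta> > 0" "\<And>H h. H \<subseteq> D \<Longrightarrow> csubspace H \<Longrightarrow> has_proj H \<Longrightarrow> h \<in> H \<Longrightarrow>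
      \<delta> * cnorm h \<le> cnorm (proj H (T h) - l0 *\<^sub>C h)"
    using lower_bound_outside_numrange[OF T l0] by blast
  have PV: "\<forall>v\<in>V n. proj (Hs n) (T v) = proj (V n) (T v)" for n
    using proj_T_triangular_extension[OF T V(1) V(2) xs] unfolding Hs_def by blast
  have "compr_gsr_with Hs D T n0 l0"
  proof (rule compr_gsr_with_extension[OF gsr V_conv T V(1) Hs PV \<delta>(1)])
    show "\<forall>h\<in>Hs n. proj (Hs n) (T h) - l0 *\<^sub>C h \<in> orth (V n) \<longrightarrow>
        \<delta> * cnorm h \<le> cnorm (proj (Hs n) (T h) - l0 *\<^sub>C h)" for n
      using \<delta>(2)[OF Hs(2) fin_dim_csubspace[OF Hs(1)] fin_dim_has_proj[OF Hs(1)]] by blast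
  qed
  then show ?thesis
    using ext unfolding compr_gsr_def Hs_def by blast
qed

lemma spectral_extension_gsr_adjoint:
  assumes adj: "D \<subseteq> adj_dom D T" and gsr: "compr_gsr_with V D T n0 l0" and l0: "l0 \<notin> \<Omega>"
  shows "\<exists>Hs. spectral_extension D T V \<Omega> Hs \<and> compr_gsr Hs D T"
proof -
  obtain e where e: "e > 0" "ball l0 e \<subseteq> - \<Omega>"
    using open_contains_ball[of "- \<Omega>"] compact_imp_closed[OF \<Omega>(1)] l0 by (auto simp: open_Compl)
  define \<rho> where "\<rho> = e / 2"
  have "\<rho> > 0"
    using e(1) unfolding \<rho>_def by simp
  have far: "\<rho> \<le> cmod (\<mu> - l0)" if "\<omega> \<in> \<Omega>" "dist \<mu> \<omega> < \<rho>" for \<mu> \<omega>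
  proof -
    have "e \<le> dist l0 \<omega>"
      using e(2) that(1) by (auto simp: subset_iff not_less)
    then show ?thesis
      using dist_triangle[of l0 \<omega> \<mu>] that(2) unfolding \<rho>_def by (simp add: dist_norm norm_minus_commute)
  qed
  obtain xs where xs: "\<And>n. triangular_extension T D True (V n) (xs n)"
    and near: "\<And>n x. x \<in> set (xs n) \<Longrightarrow> \<exists>\<omega>\<in>\<Omega>. dist (cinner (T x) x) \<omega> < \<rho>"
    and ext: "spectral_extension D T V \<Omega> (\<lambda>n. cspan (V n \<union> set (xs n)))"
    by (rule spectral_extension_triangular[of True \<rho>]) (use adj \<open>\<rho> > 0\<close> in auto)
  define Hs where "Hs = (\<lambda>n. cspan (V n \<union> set (xs n)))"
  have Hs: "fin_dim_subspace (Hs n)" "Hs n \<subseteq> D" "V n \<subseteq> Hs n" for n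
    using ext unfolding spectral_extension_def Hs_def by auto
  have PV: "\<forall>v\<in>V n. proj (Hs n) (T v) = proj (V n) (T v)" for n
    using proj_T_triangular_extension[OF T V(1) V(2) xs] unfolding Hs_def by blast
  have "compr_gsr_with Hs D T n0 l0"
  proof (rule compr_gsr_with_extension[OF gsr V_conv T V(1) Hs PV \<open>\<rho> > 0\<close>])
    fix n assume "n \<ge> n0"
    then have "l0 \<in> resolvent_set (V n) (V n) (compr (V n) T)"
      using gsr unfolding compr_gsr_with_def gsr_with_def by blast
    moreover have "\<forall>x\<in>set (xs n). \<rho> \<le> cmod (cinner (T x) x - l0)"
      using far near by blast
    ultimately show "\<forall>h\<in>Hs n. proj (Hs n) (T h) - l0 *\<^sub>C h \<in> orth (V n) \<longrightarrow>
        \<rho> * cnorm h \<le> cnorm (proj (Hs n) (T h) - l0 *\<^sub>C h)"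
      using lower_bound_of_orth_lower_bound[OF T V(1) V(2) Hs _ PV]
        triangular_extension_orth_lower_bound[OF T V(1) V(2) xs] \<open>\<rho> > 0\<close>
      unfolding Hs_def by (metis less_imp_le)
  qed
  then show ?thesis
    using ext unfolding compr_gsr_def Hs_def by blast
qed

end

theorem theorem6p4:
  fixes T :: "'a::chilbert \<Rightarrow> 'a" and D :: "'a set" and V :: "nat \<Rightarrow> 'a set"
    and \<Omega> :: "complex set"
  assumes H_sep: "separable_hilbert TYPE('a)"
    and H_inf: "infinite_dim TYPE('a)"
    and T_lin: "clinear_on D T"
    and D_dense: "dense_set D"
    and V_fd: "\<And>n. fin_dim_subspace (V n)"
    and V_dom: "\<And>n. V n \<subseteq> D"
    and V_conv: "proj_strong_to_id V"
    and \<Omega>_compact: "compact \<Omega>"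
    and \<Omega>_sub: "\<Omega> \<subseteq> W_e1 D T"
  shows "\<exists>Hs :: nat \<Rightarrow> 'a set.
           (\<forall>n. fin_dim_subspace (Hs n) \<and> Hs n \<subseteq> D \<and> V n \<subseteq> Hs n) \<and>
           proj_strong_to_id Hs \<and>
           (\<forall>e>0. \<exists>N. \<forall>n\<ge>N. \<forall>l\<in>\<Omega>. infdist l (compr_spectrum (Hs n) T) < e) \<and>
           (finite \<Omega> \<and> \<Omega> \<subseteq> interior (W_e1 D T) \<longrightarrow>
              (\<forall>n. compr_spectrum (Hs n) T = compr_spectrum (V n) T \<union> \<Omega>)) \<and>
           ((numrange D T \<noteq> UNIV \<or> D \<subseteq> adj_dom D T) \<and>
            (\<exists>n0 l0. compr_gsr_with V D T n0 l0 \<and>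
                (numrange D T \<noteq> UNIV \<longrightarrow> l0 \<notin> closure (numrange D T)) \<and>
                (numrange D T = UNIV \<longrightarrow> l0 \<notin> \<Omega>))
            \<longrightarrow> compr_gsr Hs D T)"
proof -
  note setting = T_lin V_fd V_dom V_conv \<Omega>_compact \<Omega>_sub
  show ?thesis
  proof (cases "(numrange D T \<noteq> UNIV \<or> D \<subseteq> adj_dom D T) \<and>
      (\<exists>n0 l0. compr_gsr_with V D T n0 l0 \<and>
        (numrange D T \<noteq> UNIV \<longrightarrow> l0 \<notin> closure (numrange D T)) \<and>
        (numrange D T = UNIV \<longrightarrow> l0 \<notin> \<Omega>))")
    case True
    then obtain n0 l0 where gsr: "compr_gsr_with V D T n0 l0"
      and l0: "numrange D T \<noteq> UNIV \<longrightarrow> l0 \<notin> closure (numrange D T)"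
        "numrange D T = UNIV \<longrightarrow> D \<subseteq> adj_dom D T \<and> l0 \<notin> \<Omega>"
      by blast
    then obtain Hs where "spectral_extension D T V \<Omega> Hs" "compr_gsr Hs D T"
      using spectral_extension_gsr_outside_numrange[OF setting gsr]
        spectral_extension_gsr_adjoint[OF setting _ gsr] by (cases "numrange D T = UNIV") auto
    then show ?thesis
      unfolding spectral_extension_def by blast
  next
    case False
    obtain Hs where "spectral_extension D T V \<Omega> Hs"
      using spectral_extension_exists[OF setting] by blast
    then show ?thesis
      unfolding spectral_extension_def by (intro exI[of _ Hs] conjI impI) (use False in blast)+
  qed
qed

end
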